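(* In the $d$-dimensional setting with $v\equiv0$, $\beta\ge0$, $\zeta_l>0$, $\zeta_r>0$ and $N_1\ge2$, $$\mathcal{J}(N_1,\dots,N_d)=\frac{2(\alpha_{in}^l\alpha_{out}^r-\alpha_{out}^l\alpha_{in}^r)\prod_{n=2}^dN_n}{\big(\beta(N_1-1)+\zeta_l+\zeta_r\big)\zeta_l\zeta_r+\zeta_l+\zeta_r}.$$
   Context: Let $d\ge1$ and $N_1,\dots,N_d\in\mathbb{N}$. Let $\mathfrak L=\{1,\dots,N_1\}\times\cdots\times\{1,\dots,N_d\}$; $NN(\nu)$ is the set of nearest neighbours of $\nu$ in $\mathfrak L$. For $i=1,\dots,N_1$ let $M_i=\{\nu\in\mathfrak L:\nu_1=i\}$, and for $\nu\notin M_{N_1}$ let $\nu_+=(\nu_1+1,\nu_2,\dots,\nu_d)$. Let $\{e_\nu\}$ be the standard basis of $\mathbb{C}^{|\mathfrak L|}$, $p_\nu=|e_\nu\rangle\langle e_\nu|$, $P_1=\sum_{\nu\in M_1}p_\nu$, $P_{N_1}=\sum_{\nu\in M_{N_1}}p_\nu$. Given a real $v$ on $\mathfrak L$, $(h\psi)(\nu)=-\sum_{\mu\in NN(\nu)}\psi(\mu)+v(\nu)\psi(\nu)$. Let $\alpha_{in}^l,\alpha_{out}^l,\alpha_{in}^r,\alpha_{out}^r,\beta\ge0$, $\zeta_l=\alpha_{in}^l+\alpha_{out}^l$, $\zeta_r=\alpha_{in}^r+\alpha_{out}^r$. Define $l(a)=-i[h,a]-\zeta_l\{P_1,a\}-\zeta_r\{P_{N_1},a\}+\beta\left(\sum_{\nu\in\mathfrak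 L}p_\nu ap_\nu-a\right)$ on $M_{|\mathfrak L|}(\mathbb{C})$, $R_\infty=\int_0^\infty e^{tl}(2\alpha_{in}^lP_1+2\alpha_{in}^rP_{N_1})\,dt$, and the stationary current $\mathcal{J}(N_1,\dots,N_d)=\sum_{\nu\in M_1}2\,\mathrm{Im}\langle e_{\nu_+},R_\infty e_\nu\rangle$. *)

theory Defs
  imports "HOL-Analysis.Analysis"
begin

text \<open>Sites of the lattice are lists nu of length d; coordinate k (0-based list index)
  is the paper's coordinate k+1 and ranges over 1..N_(k+1).\<close>

type_synonym site = "nat list"
type_synonym cmat = "site \<Rightarrow> site \<Rightarrow> complex"
type_synonym cvec = "site \<Rightarrow> complex"

definition lattice :: "nat list \<Rightarrow> site set" where
  "lattice N = {\<nu>. length \<nu> = length N \<and> (\<forall>i<length N. 1 \<le> \<nu>!i \<and> \<nu>!i \<le> N!i)}"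

definition NN :: "nat list \<Rightarrow> site \<Rightarrow> site set" where
  "NN N \<nu> = {\<mu> \<in> lattice N. \<exists>i<length N. (\<mu>!i = \<nu>!i + 1 \<or> \<nu>!i = \<mu>!i + 1)
                 \<and> (\<forall>j<length N. j \<noteq> i \<longrightarrow> \<mu>!j = \<nu>!j)}"

definition slab :: "nat list \<Rightarrow> nat \<Rightarrow> site set" where
  "slab N i = {\<nu> \<in> lattice N. \<nu>!0 = i}"

definition shift :: "site \<Rightarrow> site" where
  "shift \<nu> = \<nu>[0 := \<nu>!0 + 1]"

definition basis_vec :: "site \<Rightarrow> cvec" where
  "basis_vec \<nu> = (\<lambda>\<mu>. if \<mu> = \<nu> then 1 else 0)"

definition proj :: "site \<Rightarrow> cmat" where
  "proj \<nu> = (\<lambda>\<mu> \<kappa>. if \<mu> = \<nu> \<and> \<kappa> = \<nu> then 1 else 0)"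

definition mmult :: "nat list \<Rightarrow> cmat \<Rightarrow> cmat \<Rightarrow> cmat" where
  "mmult N a b = (\<lambda>\<mu> \<kappa>. \<Sum>\<xi>\<in>lattice N. a \<mu> \<xi> * b \<xi> \<kappa>)"

definition mvec :: "nat list \<Rightarrow> cmat \<Rightarrow> cvec \<Rightarrow> cvec" where
  "mvec N a x = (\<lambda>\<mu>. \<Sum>\<kappa>\<in>lattice N. a \<mu> \<kappa> * x \<kappa>)"

definition cinner :: "nat list \<Rightarrow> cvec \<Rightarrow> cvec \<Rightarrow> complex" where
  "cinner N x y = (\<Sum>\<mu>\<in>lattice N. cnj (x \<mu>) * y \<mu>)"

definition msum :: "'i set \<Rightarrow> ('i \<Rightarrow> cmat) \<Rightarrow> cmat" where
  "msum A f = (\<lambda>\<mu> \<kappa>. \<Sum>x\<in>A. f x \<mu> \<kappa>)"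

definition Pleft :: "nat list \<Rightarrow> cmat" where
  "Pleft N = msum (slab N 1) proj"

definition Pright :: "nat list \<Rightarrow> cmat" where
  "Pright N = msum (slab N (N!0)) proj"

definition ham :: "nat list \<Rightarrow> (site \<Rightarrow> real) \<Rightarrow> cmat" where
  "ham N v = (\<lambda>\<nu> \<mu>. if \<nu> \<in> lattice N \<and> \<mu> \<in> lattice N then
       - (if \<mu> \<in> NN N \<nu> then 1 else 0) + (if \<mu> = \<nu> then complex_of_real (v \<nu>) else 0)
     else 0)"

definition lindblad :: "nat list \<Rightarrow> (site \<Rightarrow> real) \<Rightarrow> real \<Rightarrow> real \<Rightarrow> real \<Rightarrow> cmat \<Rightarrow> cmat" where
  "lindblad N v \<zeta>l \<zeta>r \<beta> a = (\<lambda>\<mu> \<kappa>.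
      - \<i> * (mmult N (ham N v) a \<mu> \<kappa> - mmult N a (ham N v) \<mu> \<kappa>)
      - complex_of_real \<zeta>l * (mmult N (Pleft N) a \<mu> \<kappa> + mmult N a (Pleft N) \<mu> \<kappa>)
      - complex_of_real \<zeta>r * (mmult N (Pright N) a \<mu> \<kappa> + mmult N a (Pright N) \<mu> \<kappa>)
      + complex_of_real \<beta> * (msum (lattice N) (\<lambda>\<nu>. mmult N (mmult N (proj \<nu>) a) (proj \<nu>)) \<mu> \<kappa> - a \<mu> \<kappa>))"

definition exp_lindblad ::
  "nat list \<Rightarrow> (site \<Rightarrow> real) \<Rightarrow> real \<Rightarrow> real \<Rightarrow> real \<Rightarrow> real \<Rightarrow> cmat \<Rightarrow> cmat" where
  "exp_lindblad N v \<zeta>l \<zeta>r \<beta> t a = (\<lambda>\<mu> \<kappa>.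
     (\<Sum>k. complex_of_real (t ^ k / fact k) * ((lindblad N v \<zeta>l \<zeta>r \<beta> ^^ k) a) \<mu> \<kappa>))"

definition R_inf ::
  "nat list \<Rightarrow> (site \<Rightarrow> real) \<Rightarrow> real \<Rightarrow> real \<Rightarrow> real \<Rightarrow> real \<Rightarrow> real \<Rightarrow> cmat" where
  "R_inf N v ainl aoutl ainr aoutr \<beta> = (\<lambda>\<mu> \<kappa>.
     integral {0..} (\<lambda>t. exp_lindblad N v (ainl + aoutl) (ainr + aoutr) \<beta> t
        (\<lambda>\<mu>' \<kappa>'. 2 * complex_of_real ainl * Pleft N \<mu>' \<kappa>' + 2 * complex_of_real ainr * Pright N \<mu>' \<kappa>')
        \<mu> \<kappa>))"

definition current ::
  "nat list \<Rightarrow> (site \<Rightarrow> real) \<Rightarrow> real \<Rightarrow> real \<Rightarrow> real \<Rightarrow> real \<Rightarrow> real \<Rightarrow> real" where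
  "current N v ainl aoutl ainr aoutr \<beta> =
     (\<Sum>\<nu>\<in>slab N 1. 2 * Im (cinner N (basis_vec (shift \<nu>))
                      (mvec N (R_inf N v ainl aoutl ainr aoutr \<beta>) (basis_vec \<nu>))))"

end

theory Submission
  imports Defs
begin

text \<open>At zero potential the equation \<open>l(R) = -S\<close> for the source
  \<open>S = 2 \<alpha>\<^sup>l\<^sub>i\<^sub>n P\<^sub>1 + 2 \<alpha>\<^sup>r\<^sub>i\<^sub>n P\<^sub>N\<^sub>1\<close> can be solved by hand: \<open>R\<close> has diagonal entry \<open>x(\<nu>\<^sub>1)\<close>
  depending only on the first coordinate, entries \<open>i j\<close> at \<open>(\<nu>\<^sub>+, \<nu>)\<close> and \<open>-i j\<close> at \<open>(\<nu>, \<nu>\<^sub>+)\<close>,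
  and zeros elsewhere. The off-diagonal equations fix the steps of \<open>x\<close> in terms of the flux \<open>j\<close>,
  and the two boundary equations then force \<open>j = (\<alpha>\<^sup>l\<^sub>i\<^sub>n \<zeta>\<^sub>r - \<alpha>\<^sup>r\<^sub>i\<^sub>n \<zeta>\<^sub>l) / D\<close>, where \<open>D\<close> is the
  denominator of the theorem and \<open>\<alpha>\<^sup>l\<^sub>i\<^sub>n \<zeta>\<^sub>r - \<alpha>\<^sup>r\<^sub>i\<^sub>n \<zeta>\<^sub>l = \<alpha>\<^sup>l\<^sub>i\<^sub>n \<alpha>\<^sup>r\<^sub>o\<^sub>u\<^sub>t - \<alpha>\<^sup>l\<^sub>o\<^sub>u\<^sub>t \<alpha>\<^sup>r\<^sub>i\<^sub>n\<close>.
  Since \<open>d/dt e\<^sup>t\<^sup>l R = -e\<^sup>t\<^sup>l S\<close>, the integral \<open>R\<^sub>\<infinity>\<close> equals \<open>R\<close> once \<open>e\<^sup>t\<^sup>l\<close> is known to decay.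
  Decay comes from the Hilbert--Schmidt norm, which is nonincreasing along the flow. It cannot
  stay constant on \<open>[0,1]\<close> along a nonzero trajectory: the boundary dissipation kills the rows in
  the slab \<open>M\<^sub>1\<close>, and the hopping then transports this vanishing along the first coordinate.
  Compactness of the unit sphere turns this into a uniform contraction over unit time.
  Finally each \<open>\<nu> \<in> M\<^sub>1\<close> contributes \<open>2 Im (i j) = 2 j\<close> to the current.\<close>

lemma compact_PiE_UNIV:
  assumes "\<And>i. compact (T i)"
  shows "compact (PiE UNIV T :: ('a \<Rightarrow> 'b::topological_space) set)"
proof -
  have "compactin (product_topology (\<lambda>i. euclidean) UNIV) (PiE UNIV T)"
    using assms by (simp add: compactin_PiE)
  then show ?thesis by (simp add: euclidean_product_topology)
qed

lemma continuous_on_entry: "continuous_on S (\<lambda>x::'a \<Rightarrow> 'b \<Rightarrow> 'c::topological_space. x \<mu> \<kappa>)"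
  by (rule continuous_on_subset[OF continuous_on_product_then_coordinatewise[OF
        continuous_on_product_coordinates]]) auto

lemma has_real_derivative_cmod_power2:
  assumes "(f has_vector_derivative f') (at t)"
  shows "((\<lambda>t. (cmod (f t))\<^sup>2) has_real_derivative 2 * Re (cnj (f t) * f')) (at t)"
proof -
  have re: "((\<lambda>t. (Re (f t))\<^sup>2) has_real_derivative (2 * Re (f t) * Re f')) (at t)"
    by (rule DERIV_cong[OF DERIV_power[OF has_field_derivative_Re[OF assms], of 2]]) simp
  have im: "((\<lambda>t. (Im (f t))\<^sup>2) has_real_derivative (2 * Im (f t) * Im f')) (at t)"
    by (rule DERIV_cong[OF DERIV_power[OF has_field_derivative_Im[OF assms], of 2]]) simp
  from DERIV_add[OF re im] show ?thesis by (simp add: cmod_power2 algebra_simps)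
qed

lemma has_vector_derivative_zero_on_open:
  fixes g :: "real \<Rightarrow> 'a::real_normed_vector"
  assumes "(g has_vector_derivative D) (at s)" "open S" "s \<in> S" "\<And>\<sigma>. \<sigma> \<in> S \<Longrightarrow> g \<sigma> = 0"
  shows "D = 0"
proof -
  have "((\<lambda>_. 0) has_vector_derivative D) (at s)"
    by (rule has_vector_derivative_transform_within_open[OF assms(1-3)]) (simp add: assms(4))
  then show ?thesis using has_vector_derivative_const vector_derivative_unique_at by blast
qed

lemma exp_neg_tendsto_0:
  fixes c :: real
  assumes "c > 0"
  shows "((\<lambda>t. C * exp (- c * t)) \<longlongrightarrow> 0) at_top"
proof -
  have "filterlim (\<lambda>t::real. - c * t) at_bot at_top"
    using assms by (intro filterlim_tendsto_neg_mult_at_bot[OF tendsto_const] filterlim_ident) auto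
  then have "((\<lambda>t. exp (- c * t)) \<longlongrightarrow> 0) at_top"
    by (rule filterlim_compose[OF exp_at_bot])
  then show ?thesis using tendsto_mult_right_zero by blast
qed

lemma exponential_decay_of_unit_step_contraction:
  fixes E :: "real \<Rightarrow> real"
  assumes nonneg: "\<And>t. t \<ge> 0 \<Longrightarrow> 0 \<le> E t"
    and bounded: "\<And>t. t \<ge> 0 \<Longrightarrow> E t \<le> E 0"
    and step: "\<And>t. t \<ge> 0 \<Longrightarrow> E (t + 1) \<le> q * E t" and "q < 1"
  shows "\<exists>C c. c > 0 \<and> (\<forall>t\<ge>0. E t \<le> C * exp (- c * t))"
proof -
  define \<rho> where "\<rho> = max q (1/2)"
  have \<rho>: "0 < \<rho>" "\<rho> < 1" "q \<le> \<rho>" unfolding \<rho>_def using \<open>q < 1\<close> by auto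
  have geometric: "E t \<le> \<rho> ^ n * E 0" if "real n \<le> t" for n t
    using that
  proof (induction n arbitrary: t)
    case 0
    then show ?case using bounded by simp
  next
    case (Suc n)
    have "E t = E ((t - 1) + 1)" by simp
    also have "\<dots> \<le> q * E (t - 1)" using Suc.prems by (intro step) simp
    also have "\<dots> \<le> \<rho> * E (t - 1)" using \<rho> nonneg[of "t - 1"] Suc.prems by (intro mult_right_mono) auto
    also have "\<dots> \<le> \<rho> * (\<rho> ^ n * E 0)" using Suc \<rho> by (intro mult_left_mono) auto
    finally show ?case by simp
  qed
  have "E t \<le> E 0 / \<rho> * exp (- (- ln \<rho>) * t)" if t: "t \<ge> 0" for t
  proof -
    define n where "n = nat \<lfloor>t\<rfloor>"
    have n: "real n \<le> t" "t - 1 \<le> real n" unfolding n_def using t by linarith+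
    have "\<rho> ^ n = \<rho> powr real n" using \<rho> by (simp add: powr_realpow)
    also have "\<dots> \<le> \<rho> powr (t - 1)" using \<rho> n by (intro powr_mono') auto
    also have "\<dots> = exp (- (- ln \<rho>) * t) / \<rho>" using \<rho> by (simp add: powr_def exp_diff algebra_simps)
    finally have "E 0 * \<rho> ^ n \<le> E 0 * (exp (- (- ln \<rho>) * t) / \<rho>)"
      using nonneg[of 0] by (intro mult_left_mono) auto
    then show ?thesis using geometric[OF n(1)] by (simp add: ac_simps)
  qed
  moreover have "- ln \<rho> > 0" using \<rho> by simp
  ultimately show ?thesis by blast
qed

lemma integral_atLeast_0_of_decaying_antiderivative:
  fixes F G :: "real \<Rightarrow> 'a::euclidean_space"
  assumes deriv: "\<And>t. t \<ge> 0 \<Longrightarrow> (G has_vector_derivative - F t) (at t within {0..})"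
    and bound: "\<And>t. t \<ge> 0 \<Longrightarrow> norm (F t) \<le> C * exp (- c * t)" and "c > 0"
    and lim: "(G \<longlongrightarrow> 0) at_top"
  shows "integral {0..} F = G 0"
proof -
  define f where "f = (\<lambda>k::nat. \<lambda>t. if t \<in> {0..real k} then F t else 0)"
  have f_integral: "(f k has_integral (G 0 - G (real k))) {0..}" for k
  proof -
    have "((\<lambda>t. - F t) has_integral (G (real k) - G 0)) {0..real k}"
      by (intro fundamental_theorem_of_calculus)
        (auto intro: has_vector_derivative_within_subset[OF deriv])
    from has_integral_neg[OF this] show ?thesis
      unfolding f_def by (subst has_integral_restrict) auto
  qed
  have "(\<lambda>k. integral {0..} (f k)) \<longlonglongrightarrow> integral {0..} F"
  proof (rule dominated_convergence(2))
    show "f k integrable_on {0..}" for k using f_integral by blast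
    show "(\<lambda>t. C * exp (- c * t)) integrable_on {0..}"
      using integrable_cmul[OF integrable_on_exp_minus_to_infinity[OF \<open>c > 0\<close>, of 0], of C] by simp
    show "norm (f k t) \<le> C * exp (- c * t)" if "t \<in> {0..}" for k t
      using bound[of t] order_trans[OF norm_ge_zero bound[of t]] that unfolding f_def by auto
    show "(\<lambda>k. f k t) \<longlonglongrightarrow> F t" if "t \<in> {0..}" for t
    proof (intro tendsto_eventually eventually_sequentiallyI)
      fix k assume "nat \<lceil>t\<rceil> \<le> k"
      then have "t \<le> real k" using real_nat_ceiling_ge[of t] of_nat_le_iff[of "nat \<lceil>t\<rceil>" k] by linarith
      then show "f k t = F t" using that unfolding f_def by simp
    qed
  qed
  moreover have "(\<lambda>k. integral {0..} (f k)) \<longlonglongrightarrow> G 0 - 0"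
    unfolding integral_unique[OF f_integral]
    by (intro tendsto_intros filterlim_compose[OF lim filterlim_real_sequentially])
  ultimately show ?thesis using LIMSEQ_unique by fastforce
qed

lemma lattice_Nil: "lattice [] = {[]}"
  by (auto simp: lattice_def)

lemma lattice_Cons: "lattice (m # M) = (\<lambda>(a,t). a # t) ` ({1..m} \<times> lattice M)"
proof (intro set_eqI iffI)
  fix x assume x: "x \<in> lattice (m # M)"
  then obtain a t where xa: "x = a # t" by (cases x) (auto simp: lattice_def)
  have "a \<in> {1..m}" using x xa by (auto simp: lattice_def dest: spec[of _ 0])
  moreover have "t \<in> lattice M" using x xa unfolding lattice_def
    by (auto dest!: spec[of _ "Suc _"])
  ultimately show "x \<in> (\<lambda>(a,t). a # t) ` ({1..m} \<times> lattice M)" using xa by force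
next
  fix x assume "x \<in> (\<lambda>(a,t). a # t) ` ({1..m} \<times> lattice M)"
  then obtain a t where "x = a # t" "a \<in> {1..m}" "t \<in> lattice M" by auto
  then show "x \<in> lattice (m # M)" unfolding lattice_def
    by (auto simp: nth_Cons split: nat.splits)
qed

lemma finite_lattice: "finite (lattice N)"
  by (induction N) (auto simp: lattice_Nil lattice_Cons)

lemma card_lattice: "card (lattice N) = prod_list N"
proof (induction N)
  case Nil then show ?case by (simp add: lattice_Nil)
next
  case (Cons m M)
  have "inj_on (\<lambda>(a,t). a # t) ({1..m} \<times> lattice M)" by (auto simp: inj_on_def)
  then show ?case by (simp add: lattice_Cons card_image card_cartesian_product Cons)
qed

lemma card_slab_1:
  assumes "length N \<ge> 1" "N!0 \<ge> 1"
  shows "card (slab N 1) = (\<Prod>n\<in>{1..<length N}. N!n)"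
proof -
  obtain m M where N: "N = m # M" using assms(1) by (cases N) auto
  have "slab N 1 = (\<lambda>t. 1 # t) ` lattice M"
    unfolding N slab_def lattice_Cons using assms(2) N by auto
  then have "card (slab N 1) = prod_list M" by (simp add: card_image inj_on_def card_lattice)
  also have "\<dots> = (\<Prod>n\<in>{1..<length N}. N!n)"
    unfolding N prod.list_conv_set_nth
    using prod.shift_bounds_Suc_ivl[of "(!) (m # M)" 0 "length M"] by simp
  finally show ?thesis .
qed

lemma NN_subset_lattice: "NN N \<nu> \<subseteq> lattice N" by (auto simp: NN_def)

lemma finite_NN: "finite (NN N \<nu>)" using finite_subset[OF NN_subset_lattice finite_lattice] .

lemma not_in_NN_self: "\<nu> \<notin> NN N \<nu>" by (auto simp: NN_def)

lemma NN_sym: "\<nu> \<in> lattice N \<Longrightarrow> \<mu> \<in> NN N \<nu> \<Longrightarrow> \<nu> \<in> NN N \<mu>"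
  unfolding NN_def by (simp, metis)

lemma NN_sym_iff: "\<nu> \<in> lattice N \<Longrightarrow> \<mu> \<in> lattice N \<Longrightarrow> \<mu> \<in> NN N \<nu> \<longleftrightarrow> \<nu> \<in> NN N \<mu>"
  using NN_sym by blast

lemma slab_subset_lattice: "slab N i \<subseteq> lattice N" by (auto simp: slab_def)

lemma finite_slab: "finite (slab N i)" using finite_subset[OF slab_subset_lattice finite_lattice] .

lemma sum_NN_eq_sum_lattice:
  "(\<Sum>\<xi>\<in>NN N \<mu>. f \<xi>) = (\<Sum>\<xi>\<in>lattice N. if \<xi> \<in> NN N \<mu> then f \<xi> else 0)"
  using finite_lattice NN_subset_lattice by (simp add: sum.inter_restrict[symmetric] Int_absorb1)

lemma sum_NN_swap:
  "(\<Sum>\<mu>\<in>lattice N. \<Sum>\<xi>\<in>NN N \<mu>. g \<mu> \<xi>) = (\<Sum>\<xi>\<in>lattice N. \<Sum>\<mu>\<in>NN N \<xi>. g \<mu> \<xi>)"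
proof -
  note restrict = sum_NN_eq_sum_lattice
  have "(\<Sum>\<mu>\<in>lattice N. \<Sum>\<xi>\<in>lattice N. if \<xi> \<in> NN N \<mu> then g \<mu> \<xi> else 0)
      = (\<Sum>\<xi>\<in>lattice N. \<Sum>\<mu>\<in>lattice N. if \<mu> \<in> NN N \<xi> then g \<mu> \<xi> else 0)"
    by (subst sum.swap) (intro sum.cong refl, metis NN_sym_iff)
  then show ?thesis by (simp add: restrict)
qed

lemma Im_sum_NN_hermitian: "Im (\<Sum>\<mu>\<in>lattice N. \<Sum>\<xi>\<in>NN N \<mu>. cnj (f \<mu>) * f \<xi>) = 0"
proof -
  let ?X = "\<Sum>\<mu>\<in>lattice N. \<Sum>\<xi>\<in>NN N \<mu>. cnj (f \<mu>) * f \<xi>"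
  have "cnj ?X = (\<Sum>\<mu>\<in>lattice N. \<Sum>\<xi>\<in>NN N \<mu>. cnj (f \<xi>) * f \<mu>)"
    by (simp add: mult.commute)
  also have "\<dots> = ?X" by (rule sum_NN_swap)
  finally show ?thesis by (metis Reals_cnj_iff complex_is_Real_iff)
qed

lemma cinner_basis_mvec_basis:
  assumes "\<mu> \<in> lattice N" "\<nu> \<in> lattice N"
  shows "cinner N (basis_vec \<mu>) (mvec N A (basis_vec \<nu>)) = A \<mu> \<nu>"
proof -
  have "mvec N A (basis_vec \<nu>) \<kappa> = A \<kappa> \<nu>" for \<kappa>
    using assms finite_lattice by (simp add: mvec_def basis_vec_def if_distrib cong: if_cong)
  then have "cinner N (basis_vec \<mu>) (mvec N A (basis_vec \<nu>))
      = (\<Sum>\<kappa>\<in>lattice N. if \<kappa> = \<mu> then A \<kappa> \<nu> else 0)"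
    unfolding cinner_def basis_vec_def by (intro sum.cong) auto
  then show ?thesis using assms finite_lattice by simp
qed

lemma msum_proj_slab:
  "msum (slab N i) proj \<mu> \<kappa> = (if \<mu> = \<kappa> \<and> \<mu> \<in> slab N i then 1 else 0)"
proof -
  have "msum (slab N i) proj \<mu> \<kappa> = (\<Sum>x\<in>slab N i. if \<mu> = \<kappa> then (if x = \<mu> then 1 else 0) else 0)"
    unfolding msum_def proj_def by (intro sum.cong) auto
  then show ?thesis using finite_slab by (cases "\<mu> = \<kappa>") auto
qed

lemma mmult_slab_left:
  "mmult N (msum (slab N i) proj) a \<mu> \<kappa> = (if \<mu> \<in> slab N i then a \<mu> \<kappa> else 0)"
proof -
  have "mmult N (msum (slab N i) proj) a \<mu> \<kappa>
      = (\<Sum>\<xi>\<in>lattice N. if \<xi> = \<mu> then (if \<mu> \<in> slab N i then a \<mu> \<kappa> else 0) else 0)"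
    unfolding mmult_def msum_proj_slab by (intro sum.cong) auto
  then show ?thesis using finite_lattice slab_subset_lattice by auto
qed

lemma mmult_slab_right:
  "mmult N a (msum (slab N i) proj) \<mu> \<kappa> = (if \<kappa> \<in> slab N i then a \<mu> \<kappa> else 0)"
proof -
  have "mmult N a (msum (slab N i) proj) \<mu> \<kappa>
      = (\<Sum>\<xi>\<in>lattice N. if \<xi> = \<kappa> then (if \<kappa> \<in> slab N i then a \<mu> \<kappa> else 0) else 0)"
    unfolding mmult_def msum_proj_slab by (intro sum.cong) auto
  then show ?thesis using finite_lattice slab_subset_lattice by auto
qed

lemma mmult_proj_left:
  "mmult N (proj \<nu>) a \<mu> \<xi> = (if \<mu> = \<nu> \<and> \<nu> \<in> lattice N then a \<nu> \<xi> else 0)"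
proof -
  have "mmult N (proj \<nu>) a \<mu> \<xi> = (\<Sum>\<eta>\<in>lattice N. if \<eta> = \<nu> then (if \<mu> = \<nu> then a \<nu> \<xi> else 0) else 0)"
    unfolding mmult_def proj_def by (intro sum.cong) auto
  then show ?thesis using finite_lattice by simp
qed

lemma mmult_proj_right:
  "mmult N a (proj \<nu>) \<mu> \<kappa> = (if \<kappa> = \<nu> \<and> \<nu> \<in> lattice N then a \<mu> \<nu> else 0)"
proof -
  have "mmult N a (proj \<nu>) \<mu> \<kappa> = (\<Sum>\<eta>\<in>lattice N. if \<eta> = \<nu> then (if \<kappa> = \<nu> then a \<mu> \<nu> else 0) else 0)"
    unfolding mmult_def proj_def by (intro sum.cong) auto
  then show ?thesis using finite_lattice by simp
qed

lemma dephasing_eq: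
  "msum (lattice N) (\<lambda>\<nu>. mmult N (mmult N (proj \<nu>) a) (proj \<nu>)) \<mu> \<kappa>
     = (if \<mu> = \<kappa> \<and> \<mu> \<in> lattice N then a \<mu> \<mu> else 0)"
proof -
  have "msum (lattice N) (\<lambda>\<nu>. mmult N (mmult N (proj \<nu>) a) (proj \<nu>)) \<mu> \<kappa>
      = (\<Sum>\<nu>\<in>lattice N. if \<nu> = \<mu> then (if \<mu> = \<kappa> then a \<mu> \<mu> else 0) else 0)"
    unfolding msum_def mmult_proj_right mmult_proj_left by (intro sum.cong) auto
  then show ?thesis using finite_lattice by simp
qed

lemma ham_zero_potential:
  "ham N (\<lambda>_. 0) \<mu> \<xi> = (if \<mu> \<in> lattice N \<and> \<xi> \<in> NN N \<mu> then -1 else 0)"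
  unfolding ham_def using NN_subset_lattice not_in_NN_self by auto

lemma mmult_ham_left:
  "mmult N (ham N (\<lambda>_. 0)) a \<mu> \<kappa> = (if \<mu> \<in> lattice N then - (\<Sum>\<xi>\<in>NN N \<mu>. a \<xi> \<kappa>) else 0)"
proof (cases "\<mu> \<in> lattice N")
  case True
  have "mmult N (ham N (\<lambda>_. 0)) a \<mu> \<kappa> = (\<Sum>\<xi>\<in>lattice N. if \<xi> \<in> NN N \<mu> then - a \<xi> \<kappa> else 0)"
    unfolding mmult_def ham_zero_potential using True by (intro sum.cong) auto
  also have "\<dots> = - (\<Sum>\<xi>\<in>NN N \<mu>. a \<xi> \<kappa>)"
    unfolding sum_NN_eq_sum_lattice sum_negf[symmetric] by (intro sum.cong) auto
  finally show ?thesis using True by simp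
qed (simp add: mmult_def ham_zero_potential)

lemma mmult_ham_right:
  "mmult N a (ham N (\<lambda>_. 0)) \<mu> \<kappa> = (if \<kappa> \<in> lattice N then - (\<Sum>\<xi>\<in>NN N \<kappa>. a \<mu> \<xi>) else 0)"
proof (cases "\<kappa> \<in> lattice N")
  case True
  have "mmult N a (ham N (\<lambda>_. 0)) \<mu> \<kappa> = (\<Sum>\<xi>\<in>lattice N. if \<xi> \<in> NN N \<kappa> then - a \<mu> \<xi> else 0)"
    unfolding mmult_def ham_zero_potential using True NN_sym_iff by (intro sum.cong) auto
  also have "\<dots> = - (\<Sum>\<xi>\<in>NN N \<kappa>. a \<mu> \<xi>)"
    unfolding sum_NN_eq_sum_lattice sum_negf[symmetric] by (intro sum.cong) auto
  finally show ?thesis using True by simp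
next
  case False
  then have "\<kappa> \<notin> NN N \<xi>" for \<xi> using NN_subset_lattice by blast
  then show ?thesis unfolding mmult_def ham_zero_potential using False by auto
qed

definition unshift :: "site \<Rightarrow> site" where
  "unshift \<nu> = \<nu>[0 := \<nu>!0 - 1]"

lemma length_shift [simp]: "length (shift \<nu>) = length \<nu>"
  by (simp add: shift_def)

lemma length_unshift [simp]: "length (unshift \<nu>) = length \<nu>"
  by (simp add: unshift_def)

locale lattice_dims =
  fixes N :: "nat list"
  assumes length_N: "length N \<ge> 1"
begin

abbreviation "Lt \<equiv> lattice N"

lemma length_N_pos: "0 < length N"
  using length_N by auto

lemma length_pos: "\<nu> \<in> Lt \<Longrightarrow> 0 < length \<nu>"
  using length_N_pos by (simp add: lattice_def)

lemma first_bounds: "\<nu> \<in> Lt \<Longrightarrow> 1 \<le> \<nu>!0 \<and> \<nu>!0 \<le> N!0"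
  using length_N_pos by (simp add: lattice_def)

lemma shift_nth: "\<nu> \<in> Lt \<Longrightarrow> shift \<nu> ! i = (if i = 0 then \<nu>!0 + 1 else \<nu>!i)"
  using length_pos by (auto simp: shift_def nth_list_update)

lemma unshift_nth: "\<nu> \<in> Lt \<Longrightarrow> unshift \<nu> ! i = (if i = 0 then \<nu>!0 - 1 else \<nu>!i)"
  using length_pos by (auto simp: unshift_def nth_list_update)

lemma shift_in_lattice_iff:
  assumes v: "\<nu> \<in> Lt"
  shows "shift \<nu> \<in> Lt \<longleftrightarrow> \<nu>!0 < N!0"
proof
  assume "shift \<nu> \<in> Lt"
  then show "\<nu>!0 < N!0" using first_bounds shift_nth[OF v, of 0] by fastforce
next
  assume "\<nu>!0 < N!0"
  then show "shift \<nu> \<in> Lt" using v by (auto simp: shift_nth[OF v] lattice_def)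
qed

lemma unshift_in_lattice_iff:
  assumes v: "\<nu> \<in> Lt"
  shows "unshift \<nu> \<in> Lt \<longleftrightarrow> \<nu>!0 \<ge> 2"
proof
  assume "unshift \<nu> \<in> Lt"
  then show "\<nu>!0 \<ge> 2" using first_bounds unshift_nth[OF v, of 0] by fastforce
next
  assume "\<nu>!0 \<ge> 2"
  then show "unshift \<nu> \<in> Lt" using v first_bounds[OF v] by (auto simp: unshift_nth[OF v] lattice_def)
qed

lemma shift_unshift: "\<nu> \<in> Lt \<Longrightarrow> shift (unshift \<nu>) = \<nu>"
  using length_pos first_bounds[of \<nu>] unfolding shift_def unshift_def
  by (auto intro!: nth_equalityI simp: nth_list_update)

lemma unshift_shift: "\<nu> \<in> Lt \<Longrightarrow> unshift (shift \<nu>) = \<nu>"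
  using length_pos unfolding shift_def unshift_def
  by (auto intro!: nth_equalityI simp: nth_list_update)

lemma shift_inj: "\<nu> \<in> Lt \<Longrightarrow> \<mu> \<in> Lt \<Longrightarrow> shift \<nu> = shift \<mu> \<longleftrightarrow> \<nu> = \<mu>"
  by (metis unshift_shift)

lemma shift_neq: "\<nu> \<in> Lt \<Longrightarrow> shift \<nu> \<noteq> \<nu>"
  using shift_nth[of \<nu> 0] by auto

lemma NN_first_cases:
  assumes "\<xi> \<in> NN N \<mu>"
  shows "\<xi>!0 = \<mu>!0 \<or> \<xi>!0 = \<mu>!0 + 1 \<or> \<mu>!0 = \<xi>!0 + 1"
proof -
  obtain i where i: "i < length N" "\<xi>!i = \<mu>!i + 1 \<or> \<mu>!i = \<xi>!i + 1"
    "\<forall>j<length N. j \<noteq> i \<longrightarrow> \<xi>!j = \<mu>!j"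
    using assms unfolding NN_def by blast
  show ?thesis
  proof (cases "i = 0")
    case True then show ?thesis using i by auto
  next
    case False then show ?thesis using i(3) length_N_pos by auto
  qed
qed

lemma NN_up_eq_shift:
  assumes m: "\<mu> \<in> Lt" and x: "\<xi> \<in> NN N \<mu>" and up: "\<xi>!0 = \<mu>!0 + 1"
  shows "\<xi> = shift \<mu>"
proof -
  obtain i where i: "i < length N" "\<forall>j<length N. j \<noteq> i \<longrightarrow> \<xi>!j = \<mu>!j"
    using x unfolding NN_def by blast
  have i0: "i = 0" using i(2) up length_N_pos by (metis n_not_Suc_n Suc_eq_plus1)
  have lx: "length \<xi> = length N" using x NN_subset_lattice by (auto simp: lattice_def)
  show ?thesis
  proof (rule nth_equalityI)
    show "length \<xi> = length (shift \<mu>)" using lx m by (simp add: lattice_def)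
    fix j assume "j < length \<xi>"
    then show "\<xi>!j = shift \<mu> ! j" using i(2) i0 up lx by (auto simp: shift_nth[OF m])
  qed
qed

lemma NN_cases:
  assumes "\<mu> \<in> Lt" "\<kappa> \<in> NN N \<mu>"
  shows "\<kappa> = shift \<mu> \<or> \<mu> = shift \<kappa> \<or> \<kappa>!0 = \<mu>!0"
  using NN_first_cases[OF assms(2)] NN_up_eq_shift[OF assms] NN_subset_lattice assms
    NN_up_eq_shift[of \<kappa> \<mu>] NN_sym[OF assms]
  by blast

lemma shift_in_NN: "\<mu> \<in> Lt \<Longrightarrow> shift \<mu> \<in> Lt \<Longrightarrow> shift \<mu> \<in> NN N \<mu>"
  using length_N unfolding NN_def by (auto intro!: exI[of _ 0] simp: shift_nth)

lemma shift_in_NN_iff: "\<mu> \<in> Lt \<Longrightarrow> shift \<mu> \<in> NN N \<mu> \<longleftrightarrow> \<mu>!0 < N!0"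
  using shift_in_NN shift_in_lattice_iff NN_subset_lattice by blast

lemma unshift_in_NN_iff: "\<mu> \<in> Lt \<Longrightarrow> unshift \<mu> \<in> NN N \<mu> \<longleftrightarrow> \<mu>!0 \<ge> 2"
  by (metis NN_subset_lattice NN_sym shift_in_NN shift_unshift subsetD unshift_in_lattice_iff)

lemma shift_in_NN_shift_iff:
  assumes m: "\<mu> \<in> Lt" and x: "\<xi> \<in> Lt" and "shift \<mu> \<in> Lt" "shift \<xi> \<in> Lt"
  shows "shift \<xi> \<in> NN N (shift \<mu>) \<longleftrightarrow> \<xi> \<in> NN N \<mu>"
proof -
  have eq: "\<And>i. (shift \<xi> ! i = shift \<mu> ! i + 1 \<or> shift \<mu> ! i = shift \<xi> ! i + 1) \<longleftrightarrow>
                 (\<xi> ! i = \<mu> ! i + 1 \<or> \<mu> ! i = \<xi> ! i + 1)"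
    by (auto simp: shift_nth[OF m] shift_nth[OF x])
  have eq2: "\<And>j. shift \<xi> ! j = shift \<mu> ! j \<longleftrightarrow> \<xi> ! j = \<mu> ! j"
    by (auto simp: shift_nth[OF m] shift_nth[OF x])
  show ?thesis unfolding NN_def mem_Collect_eq eq eq2 using assms by simp
qed

lemma shift_in_NN_iff_unshift_in_NN:
  assumes m: "\<mu> \<in> Lt" and k: "\<kappa> \<in> Lt" and ne: "\<mu> \<noteq> \<kappa>"
  shows "shift \<kappa> \<in> NN N \<mu> \<longleftrightarrow> unshift \<mu> \<in> NN N \<kappa>"
proof
  assume A: "shift \<kappa> \<in> NN N \<mu>"
  have sk: "shift \<kappa> \<in> Lt" using A NN_subset_lattice by blast
  have "\<mu>!0 \<ge> 2"
  proof (rule ccontr)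
    assume "\<not> 2 \<le> \<mu>!0"
    then have "shift \<kappa> ! 0 = \<mu>!0 + 1"
      using NN_first_cases[OF A] shift_nth[OF k, of 0] first_bounds[OF k] first_bounds[OF m] by auto
    then have "shift \<kappa> = shift \<mu>" by (rule NN_up_eq_shift[OF m A])
    then show False using shift_inj[OF k m] ne by simp
  qed
  then have u: "unshift \<mu> \<in> Lt" using unshift_in_lattice_iff[OF m] by simp
  have "shift \<kappa> \<in> NN N (shift (unshift \<mu>))" using A shift_unshift[OF m] by simp
  then have "\<kappa> \<in> NN N (unshift \<mu>)"
    using shift_in_NN_shift_iff[OF u k _ sk] shift_unshift[OF m] m by simp
  then show "unshift \<mu> \<in> NN N \<kappa>" using NN_sym[OF u] by blast
next
  assume B: "unshift \<mu> \<in> NN N \<kappa>"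
  have u: "unshift \<mu> \<in> Lt" using B NN_subset_lattice by blast
  have m2: "\<mu>!0 \<ge> 2" using unshift_in_lattice_iff[OF m] u by simp
  have kB: "\<kappa> \<in> NN N (unshift \<mu>)" using NN_sym[OF k B] .
  have sk: "shift \<kappa> \<in> Lt"
  proof (rule ccontr)
    assume "shift \<kappa> \<notin> Lt"
    then have "\<kappa>!0 = unshift \<mu> ! 0 + 1"
      using shift_in_lattice_iff[OF k] first_bounds[OF k] NN_first_cases[OF kB]
        unshift_nth[OF m, of 0] first_bounds[OF m] m2 by auto
    then have "\<kappa> = shift (unshift \<mu>)" by (rule NN_up_eq_shift[OF u kB])
    then show False using shift_unshift[OF m] ne by simp
  qed
  then show "shift \<kappa> \<in> NN N \<mu>"
    using shift_in_NN_shift_iff[OF u k _ sk] kB shift_unshift[OF m] m by simp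
qed

lemma NN_difference_first_coord:
  fixes f :: "nat \<Rightarrow> 'a::ab_group_add"
  assumes m: "\<mu> \<in> Lt" and k: "\<kappa> \<in> Lt"
  shows "(if \<kappa> \<in> NN N \<mu> then f (\<kappa>!0) - f (\<mu>!0) else 0)
    = (if \<kappa> = shift \<mu> then f (\<mu>!0 + 1) - f (\<mu>!0)
       else if \<mu> = shift \<kappa> then f (\<kappa>!0) - f (\<kappa>!0 + 1) else 0)"
proof (cases "\<kappa> \<in> NN N \<mu>")
  case True
  have first: "shift \<mu> ! 0 = \<mu>!0 + 1" "shift \<kappa> ! 0 = \<kappa>!0 + 1"
    using shift_nth[OF m, of 0] shift_nth[OF k, of 0] by simp_all
  consider "\<kappa> = shift \<mu>" | "\<mu> = shift \<kappa>" | "\<kappa>!0 = \<mu>!0" using NN_cases[OF m True] by blast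
  then show ?thesis
  proof cases
    case 1
    then have "\<mu> \<noteq> shift \<kappa>" "\<kappa>!0 = \<mu>!0 + 1" using first by auto
    then show ?thesis using True 1 by simp
  next
    case 2
    then have "\<kappa> \<noteq> shift \<mu>" "\<mu>!0 = \<kappa>!0 + 1" using first by auto
    then show ?thesis using True 2 by simp
  next
    case 3
    then have "\<kappa> \<noteq> shift \<mu>" "\<mu> \<noteq> shift \<kappa>" using first by auto
    then show ?thesis using True 3 by simp
  qed
next
  case False
  have "\<kappa> \<noteq> shift \<mu>" using False shift_in_NN[OF m] k by auto
  moreover have "\<mu> \<noteq> shift \<kappa>" using False shift_in_NN[OF k] m NN_sym[OF k] by auto
  ultimately show ?thesis using False by simp
qed

section \<open>The Hilbert--Schmidt norm\<close>

definition supported :: "cmat \<Rightarrow> bool" where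
  "supported a \<longleftrightarrow> (\<forall>\<mu> \<kappa>. \<mu> \<notin> Lt \<or> \<kappa> \<notin> Lt \<longrightarrow> a \<mu> \<kappa> = 0)"

lemma supported_diff: "supported a \<Longrightarrow> supported c \<Longrightarrow> supported (\<lambda>\<mu> \<kappa>. a \<mu> \<kappa> - c \<mu> \<kappa>)"
  and supported_scale: "supported a \<Longrightarrow> supported (\<lambda>\<mu> \<kappa>. z * a \<mu> \<kappa>)"
  and supported_sum: "(\<And>i. i \<in> I \<Longrightarrow> supported (f i)) \<Longrightarrow> supported (\<lambda>\<mu> \<kappa>. \<Sum>i\<in>I. f i \<mu> \<kappa>)"
  by (auto simp: supported_def)

definition hs_norm2 :: "cmat \<Rightarrow> real" where
  "hs_norm2 a = (\<Sum>\<mu>\<in>Lt. \<Sum>\<kappa>\<in>Lt. (cmod (a \<mu> \<kappa>))\<^sup>2)"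

lemma hs_norm2_nonneg: "hs_norm2 a \<ge> 0"
  unfolding hs_norm2_def by (intro sum_nonneg) auto

lemma hs_norm2_scale: "hs_norm2 (\<lambda>\<mu> \<kappa>. z * a \<mu> \<kappa>) = (cmod z)\<^sup>2 * hs_norm2 a"
  unfolding hs_norm2_def by (simp add: sum_distrib_left norm_mult power_mult_distrib)

lemma cmod_power2_le_hs_norm2: "supported a \<Longrightarrow> (cmod (a \<mu> \<kappa>))\<^sup>2 \<le> hs_norm2 a"
proof (cases "\<mu> \<in> Lt \<and> \<kappa> \<in> Lt")
  case True
  have "(cmod (a \<mu> \<kappa>))\<^sup>2 \<le> (\<Sum>\<kappa>\<in>Lt. (cmod (a \<mu> \<kappa>))\<^sup>2)"
    using True finite_lattice by (intro member_le_sum) auto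
  also have "\<dots> \<le> hs_norm2 a" unfolding hs_norm2_def
    using True finite_lattice
    by (intro member_le_sum[where f = "\<lambda>\<mu>. \<Sum>\<kappa>\<in>Lt. (cmod (a \<mu> \<kappa>))\<^sup>2"]) (auto intro: sum_nonneg)
  finally show ?thesis .
qed (use hs_norm2_nonneg in \<open>auto simp: supported_def\<close>)

lemma cmod_le_sqrt_hs_norm2: "supported a \<Longrightarrow> cmod (a \<mu> \<kappa>) \<le> sqrt (hs_norm2 a)"
  using cmod_power2_le_hs_norm2 real_le_rsqrt by blast

lemma hs_norm2_eq_0_iff: "supported a \<Longrightarrow> hs_norm2 a = 0 \<longleftrightarrow> a = (\<lambda>_ _. 0)"
  using cmod_power2_le_hs_norm2[of a] hs_norm2_nonneg[of a]
  by (auto simp: hs_norm2_def fun_eq_iff intro: antisym)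

lemma continuous_on_hs_norm2: "continuous_on S hs_norm2"
  unfolding hs_norm2_def by (intro continuous_intros continuous_on_entry)

lemma has_real_derivative_hs_norm2:
  assumes "\<And>\<mu> \<kappa>. ((\<lambda>t. z t \<mu> \<kappa>) has_vector_derivative z' \<mu> \<kappa>) (at t)"
  shows "((\<lambda>t. hs_norm2 (z t)) has_real_derivative
           2 * Re (\<Sum>\<mu>\<in>Lt. \<Sum>\<kappa>\<in>Lt. cnj (z t \<mu> \<kappa>) * z' \<mu> \<kappa>)) (at t)"
  unfolding hs_norm2_def Re_sum sum_distrib_left
  by (intro DERIV_sum has_real_derivative_cmod_power2 assms)

end

locale zero_potential_lindblad = lattice_dims +
  fixes zl zr b :: real
  assumes N0_ge_2: "N!0 \<ge> 2" and N_pos: "\<forall>i<length N. N!i \<ge> 1"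
    and zl_pos: "zl > 0" and zr_pos: "zr > 0" and b_nonneg: "b \<ge> 0"
begin

abbreviation "S1 \<equiv> slab N 1"
abbreviation "SN \<equiv> slab N (N!0)"

text \<open>\<open>neg_ham_comm a\<close> is \<open>a h - h a\<close> for the hopping Hamiltonian \<open>h\<close>.\<close>

definition neg_ham_comm :: "cmat \<Rightarrow> cmat" where
  "neg_ham_comm a = (\<lambda>\<mu> \<kappa>. (if \<mu> \<in> Lt then \<Sum>\<xi>\<in>NN N \<mu>. a \<xi> \<kappa> else 0)
                         - (if \<kappa> \<in> Lt then \<Sum>\<xi>\<in>NN N \<kappa>. a \<mu> \<xi> else 0))"

definition lind_op :: "cmat \<Rightarrow> cmat" where
  "lind_op a = (\<lambda>\<mu> \<kappa>. \<i> * neg_ham_comm a \<mu> \<kappa>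
      - of_real zl * ((if \<mu> \<in> S1 then a \<mu> \<kappa> else 0) + (if \<kappa> \<in> S1 then a \<mu> \<kappa> else 0))
      - of_real zr * ((if \<mu> \<in> SN then a \<mu> \<kappa> else 0) + (if \<kappa> \<in> SN then a \<mu> \<kappa> else 0))
      + of_real b * ((if \<mu> = \<kappa> \<and> \<mu> \<in> Lt then a \<mu> \<mu> else 0) - a \<mu> \<kappa>))"

lemma lindblad_eq_lind_op: "lindblad N (\<lambda>_. 0) zl zr b = lind_op"
proof (intro ext)
  fix a \<mu> \<kappa>
  show "lindblad N (\<lambda>_. 0) zl zr b a \<mu> \<kappa> = lind_op a \<mu> \<kappa>"
    unfolding lindblad_def lind_op_def neg_ham_comm_def Pleft_def Pright_def
    by (simp add: mmult_ham_left mmult_ham_right mmult_slab_left mmult_slab_right dephasing_eq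
        algebra_simps)
qed

lemma lind_op_alt: "lind_op a \<mu> \<kappa> =
      \<i> * (of_bool (\<mu> \<in> Lt) * (\<Sum>\<xi>\<in>NN N \<mu>. a \<xi> \<kappa>) - of_bool (\<kappa> \<in> Lt) * (\<Sum>\<xi>\<in>NN N \<kappa>. a \<mu> \<xi>))
      - of_real zl * ((of_bool (\<mu> \<in> S1) + of_bool (\<kappa> \<in> S1)) * a \<mu> \<kappa>)
      - of_real zr * ((of_bool (\<mu> \<in> SN) + of_bool (\<kappa> \<in> SN)) * a \<mu> \<kappa>)
      + of_real b * (of_bool (\<mu> = \<kappa> \<and> \<mu> \<in> Lt) * a \<mu> \<mu> - a \<mu> \<kappa>)"
  unfolding lind_op_def neg_ham_comm_def of_bool_def by (auto simp: algebra_simps)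

lemma lind_op_add: "lind_op (\<lambda>\<mu> \<kappa>. a \<mu> \<kappa> + c \<mu> \<kappa>) = (\<lambda>\<mu> \<kappa>. lind_op a \<mu> \<kappa> + lind_op c \<mu> \<kappa>)"
  unfolding lind_op_alt sum.distrib by (intro ext) algebra

lemma lind_op_diff: "lind_op (\<lambda>\<mu> \<kappa>. a \<mu> \<kappa> - c \<mu> \<kappa>) = (\<lambda>\<mu> \<kappa>. lind_op a \<mu> \<kappa> - lind_op c \<mu> \<kappa>)"
  unfolding lind_op_alt sum_subtractf by (intro ext) algebra

lemma lind_op_scale: "lind_op (\<lambda>\<mu> \<kappa>. z * a \<mu> \<kappa>) = (\<lambda>\<mu> \<kappa>. z * lind_op a \<mu> \<kappa>)"
  unfolding lind_op_alt sum_distrib_left[symmetric] by (intro ext) algebra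

lemma lind_op_sums:
  assumes "\<And>\<mu> \<kappa>. (\<lambda>k. f k \<mu> \<kappa>) sums (F \<mu> \<kappa>)"
  shows "(\<lambda>k. lind_op (f k) \<mu> \<kappa>) sums (lind_op F \<mu> \<kappa>)"
  unfolding lind_op_alt by (intro sums_add sums_diff sums_mult sums_sum assms)

lemma supported_lind_op: "supported a \<Longrightarrow> supported (lind_op a)"
  unfolding supported_def lind_op_alt by auto

lemma supported_lind_op_power: "supported a \<Longrightarrow> supported ((lind_op ^^ k) a)"
  by (induction k) (auto simp: supported_lind_op)

definition lind_const :: real where
  "lind_const = 2 * real (card Lt) + 2 * zl + 2 * zr + 2 * b"

lemma cmod_sum_NN_le:
  assumes "\<And>\<xi>. cmod (g \<xi>) \<le> M" "M \<ge> 0"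
  shows "cmod (\<Sum>\<xi>\<in>NN N \<mu>. g \<xi>) \<le> real (card Lt) * M"
proof -
  have "cmod (\<Sum>\<xi>\<in>NN N \<mu>. g \<xi>) \<le> (\<Sum>\<xi>\<in>NN N \<mu>. cmod (g \<xi>))" by (rule norm_sum)
  also have "\<dots> \<le> real (card (NN N \<mu>)) * M" using sum_mono[OF assms(1)] by simp
  also have "\<dots> \<le> real (card Lt) * M"
    using card_mono[OF finite_lattice NN_subset_lattice] assms(2) by (intro mult_right_mono) auto
  finally show ?thesis .
qed

lemma cmod_lind_op_le:
  assumes bound: "\<And>\<mu> \<kappa>. cmod (a \<mu> \<kappa>) \<le> M"
  shows "cmod (lind_op a \<mu> \<kappa>) \<le> lind_const * M"
proof -
  have M: "M \<ge> 0" using bound[of undefined undefined] by (meson norm_ge_zero order_trans)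
  have indicator: "cmod (of_bool P * x) \<le> cmod x" for P and x :: complex by (cases P) auto
  have pair: "cmod ((of_bool P + of_bool Q) * x) \<le> 2 * cmod x" for P Q and x :: complex
    by (cases P; cases Q) (auto simp: norm_mult)
  have hop_term: "cmod (of_bool P * (\<Sum>\<xi>\<in>NN N \<nu>. f \<xi>)) \<le> real (card Lt) * M"
    if "\<And>\<xi>. cmod (f \<xi>) \<le> M" for P \<nu> f
    using order_trans[OF indicator cmod_sum_NN_le[OF that M]] .
  let ?X = "of_bool (\<mu> \<in> Lt) * (\<Sum>\<xi>\<in>NN N \<mu>. a \<xi> \<kappa>)"
  let ?Y = "of_bool (\<kappa> \<in> Lt) * (\<Sum>\<xi>\<in>NN N \<kappa>. a \<mu> \<xi>)"
  have "cmod (\<i> * (?X - ?Y)) \<le> cmod ?X + cmod ?Y" by (simp add: norm_mult norm_triangle_ineq4)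
  also have "\<dots> \<le> real (card Lt) * M + real (card Lt) * M" by (intro add_mono hop_term bound)
  finally have hop: "cmod (\<i> * (?X - ?Y)) \<le> 2 * real (card Lt) * M"
    by (simp only: mult_2 distrib_right)
  have dephase: "cmod (of_bool (\<mu> = \<kappa> \<and> \<mu> \<in> Lt) * a \<mu> \<mu> - a \<mu> \<kappa>) \<le> 2 * M"
    using norm_triangle_ineq4 order_trans[OF indicator bound] bound by (smt (verit))
  have boundary: "cmod ((of_bool P + of_bool Q) * a \<mu> \<kappa>) \<le> 2 * M" for P Q
    using pair[of P Q "a \<mu> \<kappa>"] bound[of \<mu> \<kappa>] by linarith
  have scaled: "cmod (of_real r * x) \<le> r * (2 * M)" if "r \<ge> 0" "cmod x \<le> 2 * M" for r x
    using that by (simp add: norm_mult mult_left_mono)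
  have four_terms: "cmod (x - y - z + w) \<le> cmod x + cmod y + cmod z + cmod w" for x y z w :: complex
    using norm_triangle_ineq[of "x - y - z" w] norm_triangle_ineq4[of "x - y" z]
      norm_triangle_ineq4[of x y] by linarith
  have "cmod (lind_op a \<mu> \<kappa>) \<le> 2 * real (card Lt) * M + zl * (2 * M) + zr * (2 * M) + b * (2 * M)"
    unfolding lind_op_alt using zl_pos zr_pos b_nonneg
    by (intro order_trans[OF four_terms] add_mono hop scaled boundary dephase) auto
  then show ?thesis unfolding lind_const_def by (simp add: algebra_simps)
qed

lemma cmod_lind_op_power_le:
  assumes "\<And>\<mu> \<kappa>. cmod (a \<mu> \<kappa>) \<le> M"
  shows "cmod ((lind_op ^^ k) a \<mu> \<kappa>) \<le> lind_const ^ k * M"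
proof (induction k arbitrary: \<mu> \<kappa>)
  case 0 then show ?case using assms by simp
next
  case (Suc k)
  have "cmod (lind_op ((lind_op ^^ k) a) \<mu> \<kappa>) \<le> lind_const * (lind_const ^ k * M)"
    by (rule cmod_lind_op_le) (rule Suc.IH)
  then show ?case by (simp add: algebra_simps)
qed

section \<open>The evolution semigroup\<close>

definition evol_coeff :: "cmat \<Rightarrow> site \<Rightarrow> site \<Rightarrow> nat \<Rightarrow> complex" where
  "evol_coeff a \<mu> \<kappa> k = (lind_op ^^ k) a \<mu> \<kappa> / of_nat (fact k)"

definition evol :: "real \<Rightarrow> cmat \<Rightarrow> cmat" where
  "evol t a = (\<lambda>\<mu> \<kappa>. \<Sum>k. evol_coeff a \<mu> \<kappa> k * (of_real t) ^ k)"

lemma exp_lindblad_eq_evol: "exp_lindblad N (\<lambda>_. 0) zl zr b t a = evol t a"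
  unfolding exp_lindblad_def evol_def evol_coeff_def lindblad_eq_lind_op
  by (intro ext suminf_cong) (simp add: field_simps)

lemma summable_evol_coeff:
  assumes "supported a"
  shows "summable (\<lambda>k. evol_coeff a \<mu> \<kappa> k * z ^ k)"
proof (rule summable_comparison_test')
  show "summable (\<lambda>k. sqrt (hs_norm2 a) * (inverse (fact k) * (lind_const * cmod z) ^ k))"
    by (intro summable_mult summable_exp)
  fix k
  have "cmod (evol_coeff a \<mu> \<kappa> k * z ^ k) = cmod ((lind_op ^^ k) a \<mu> \<kappa>) / fact k * cmod z ^ k"
    unfolding evol_coeff_def by (simp add: norm_mult norm_divide norm_power)
  also have "\<dots> \<le> lind_const ^ k * sqrt (hs_norm2 a) / fact k * cmod z ^ k"
    by (intro mult_right_mono divide_right_mono cmod_lind_op_power_le cmod_le_sqrt_hs_norm2 assms)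
      auto
  also have "\<dots> = sqrt (hs_norm2 a) * (inverse (fact k) * (lind_const * cmod z) ^ k)"
    by (simp add: field_simps)
  finally show "norm (evol_coeff a \<mu> \<kappa> k * z ^ k)
      \<le> sqrt (hs_norm2 a) * (inverse (fact k) * (lind_const * cmod z) ^ k)" by simp
qed

lemma evol_coeff_lind_op: "evol_coeff (lind_op a) \<mu> \<kappa> k = diffs (evol_coeff a \<mu> \<kappa>) k"
proof -
  have "(lind_op ^^ k) (lind_op a) = (lind_op ^^ Suc k) a" by (simp only: funpow_Suc_right o_apply)
  moreover have "(of_nat (fact (Suc k)) :: complex) = of_nat (Suc k) * of_nat (fact k)"
    by (simp only: fact_Suc of_nat_mult of_nat_id)
  moreover have "(of_nat (fact k) :: complex) \<noteq> 0" "(of_nat (Suc k) :: complex) \<noteq> 0"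
    by (simp, metis of_nat_eq_0_iff nat.simps(3))
  ultimately show ?thesis unfolding evol_coeff_def diffs_def
    by (simp add: divide_simps del: funpow.simps of_nat_Suc)
qed

lemma has_vector_derivative_evol:
  assumes "supported a"
  shows "((\<lambda>t. evol t a \<mu> \<kappa>) has_vector_derivative evol t (lind_op a) \<mu> \<kappa>) (at t within S)"
proof -
  have "((\<lambda>x. \<Sum>n. evol_coeff a \<mu> \<kappa> n * x ^ n) has_field_derivative
         (\<Sum>n. diffs (evol_coeff a \<mu> \<kappa>) n * x ^ n)) (at x)" for x :: complex
    by (rule termdiffs_strong_converges_everywhere) (rule summable_evol_coeff[OF assms])
  from has_vector_derivative_real_field[OF this[of "of_real t"]]
  show ?thesis unfolding evol_def evol_coeff_lind_op[symmetric] .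
qed

lemma continuous_on_evol: "supported a \<Longrightarrow> continuous_on S (\<lambda>t. evol t a \<mu> \<kappa>)"
  by (metis has_vector_derivative_evol has_vector_derivative_continuous
      continuous_at_imp_continuous_on)

lemma evol_at_0: "evol 0 a = a"
  unfolding evol_def of_real_0 powser_zero by (intro ext) (simp add: evol_coeff_def)

lemma supported_evol: "supported a \<Longrightarrow> supported (evol t a)"
  using supported_lind_op_power unfolding supported_def evol_def evol_coeff_def by auto

lemma evol_add:
  assumes "supported a" "supported c"
  shows "evol t (\<lambda>\<mu> \<kappa>. a \<mu> \<kappa> + c \<mu> \<kappa>) = (\<lambda>\<mu> \<kappa>. evol t a \<mu> \<kappa> + evol t c \<mu> \<kappa>)"
proof (intro ext)
  fix \<mu> \<kappa>
  have "(lind_op ^^ k) (\<lambda>\<mu> \<kappa>. a \<mu> \<kappa> + c \<mu> \<kappa>) = (\<lambda>\<mu> \<kappa>. (lind_op ^^ k) a \<mu> \<kappa> + (lind_op ^^ k) c \<mu> \<kappa>)"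
    for k by (induction k) (auto simp: lind_op_add)
  then have "evol t (\<lambda>\<mu> \<kappa>. a \<mu> \<kappa> + c \<mu> \<kappa>) \<mu> \<kappa>
      = (\<Sum>k. evol_coeff a \<mu> \<kappa> k * (of_real t) ^ k + evol_coeff c \<mu> \<kappa> k * (of_real t) ^ k)"
    unfolding evol_def evol_coeff_def by (simp add: add_divide_distrib distrib_right)
  also have "\<dots> = evol t a \<mu> \<kappa> + evol t c \<mu> \<kappa>" unfolding evol_def
    by (intro suminf_add[symmetric] summable_evol_coeff assms)
  finally show "evol t (\<lambda>\<mu> \<kappa>. a \<mu> \<kappa> + c \<mu> \<kappa>) \<mu> \<kappa> = evol t a \<mu> \<kappa> + evol t c \<mu> \<kappa>" .
qed

lemma evol_scale:
  assumes "supported a"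
  shows "evol t (\<lambda>\<mu> \<kappa>. z * a \<mu> \<kappa>) = (\<lambda>\<mu> \<kappa>. z * evol t a \<mu> \<kappa>)"
proof (intro ext)
  fix \<mu> \<kappa>
  have "(lind_op ^^ k) (\<lambda>\<mu> \<kappa>. z * a \<mu> \<kappa>) = (\<lambda>\<mu> \<kappa>. z * (lind_op ^^ k) a \<mu> \<kappa>)" for k
    by (induction k) (auto simp: lind_op_scale)
  then have "evol t (\<lambda>\<mu> \<kappa>. z * a \<mu> \<kappa>) \<mu> \<kappa> = (\<Sum>k. z * (evol_coeff a \<mu> \<kappa> k * (of_real t) ^ k))"
    unfolding evol_def evol_coeff_def by (simp add: algebra_simps)
  also have "\<dots> = z * evol t a \<mu> \<kappa>" unfolding evol_def
    by (intro suminf_mult summable_evol_coeff assms)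
  finally show "evol t (\<lambda>\<mu> \<kappa>. z * a \<mu> \<kappa>) \<mu> \<kappa> = z * evol t a \<mu> \<kappa>" .
qed

lemma evol_sum:
  "finite I \<Longrightarrow> (\<And>i. i \<in> I \<Longrightarrow> supported (f i)) \<Longrightarrow>
   evol t (\<lambda>\<mu> \<kappa>. \<Sum>i\<in>I. f i \<mu> \<kappa>) = (\<lambda>\<mu> \<kappa>. \<Sum>i\<in>I. evol t (f i) \<mu> \<kappa>)"
proof (induction I rule: finite_induct)
  case empty
  then show ?case using evol_scale[of "\<lambda>_ _. 0" t 0] by (simp add: supported_def)
next
  case (insert x F)
  then show ?case by (simp add: evol_add supported_sum)
qed

lemma lind_op_evol: "supported a \<Longrightarrow> lind_op (evol t a) = evol t (lind_op a)"
proof (intro ext)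
  fix \<mu> \<kappa>
  assume sa: "supported a"
  have "lind_op (\<lambda>\<mu> \<kappa>. evol_coeff a \<mu> \<kappa> k * (of_real t) ^ k) \<mu> \<kappa>
      = evol_coeff (lind_op a) \<mu> \<kappa> k * (of_real t) ^ k" for k
  proof -
    have "lind_op (\<lambda>\<mu> \<kappa>. evol_coeff a \<mu> \<kappa> k * (of_real t) ^ k)
        = lind_op (\<lambda>\<mu> \<kappa>. ((of_real t) ^ k / of_nat (fact k)) * (lind_op ^^ k) a \<mu> \<kappa>)"
      unfolding evol_coeff_def by (simp add: field_simps)
    then show ?thesis unfolding lind_op_scale evol_coeff_def by (simp add: funpow_swap1 field_simps)
  qed
  moreover have "(\<lambda>k. lind_op (\<lambda>\<mu> \<kappa>. evol_coeff a \<mu> \<kappa> k * (of_real t) ^ k) \<mu> \<kappa>)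
      sums lind_op (evol t a) \<mu> \<kappa>"
    unfolding evol_def by (intro lind_op_sums summable_sums summable_evol_coeff sa)
  ultimately show "lind_op (evol t a) \<mu> \<kappa> = evol t (lind_op a) \<mu> \<kappa>"
    unfolding evol_def by (simp add: sums_iff)
qed

lemma has_vector_derivative_evol_flow:
  "supported a \<Longrightarrow> ((\<lambda>t. evol t a \<mu> \<kappa>) has_vector_derivative lind_op (evol t a) \<mu> \<kappa>) (at t)"
  using has_vector_derivative_evol[of a \<mu> \<kappa> t UNIV] by (simp add: lind_op_evol)

section \<open>Dissipation of the Hilbert--Schmidt norm\<close>

definition dissipation :: "cmat \<Rightarrow> real" where
  "dissipation a = Re (\<Sum>\<mu>\<in>Lt. \<Sum>\<kappa>\<in>Lt. cnj (a \<mu> \<kappa>) * lind_op a \<mu> \<kappa>)"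

definition damping :: "site \<Rightarrow> site \<Rightarrow> real" where
  "damping \<mu> \<kappa> = zl * (of_bool (\<mu> \<in> S1) + of_bool (\<kappa> \<in> S1))
     + zr * (of_bool (\<mu> \<in> SN) + of_bool (\<kappa> \<in> SN)) + b * of_bool (\<mu> \<noteq> \<kappa>)"

lemma damping_nonneg: "damping \<mu> \<kappa> \<ge> 0"
  using zl_pos zr_pos b_nonneg unfolding damping_def by simp

lemma Im_hopping_form_eq_0: "Im (\<Sum>\<mu>\<in>Lt. \<Sum>\<kappa>\<in>Lt. cnj (a \<mu> \<kappa>) *
   ((\<Sum>\<xi>\<in>NN N \<mu>. a \<xi> \<kappa>) - (\<Sum>\<xi>\<in>NN N \<kappa>. a \<mu> \<xi>))) = 0"
proof -
  have "(\<Sum>\<mu>\<in>Lt. \<Sum>\<kappa>\<in>Lt. cnj (a \<mu> \<kappa>) * ((\<Sum>\<xi>\<in>NN N \<mu>. a \<xi> \<kappa>) - (\<Sum>\<xi>\<in>NN N \<kappa>. a \<mu> \<xi>)))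
      = (\<Sum>\<kappa>\<in>Lt. \<Sum>\<mu>\<in>Lt. \<Sum>\<xi>\<in>NN N \<mu>. cnj (a \<mu> \<kappa>) * a \<xi> \<kappa>)
        - (\<Sum>\<mu>\<in>Lt. \<Sum>\<kappa>\<in>Lt. \<Sum>\<xi>\<in>NN N \<kappa>. cnj (a \<mu> \<kappa>) * a \<mu> \<xi>)"
    by (subst sum.swap[of _ Lt Lt])
      (simp add: right_diff_distrib sum_subtractf sum_distrib_left)
  then show ?thesis
    using Im_sum_NN_hermitian[of "\<lambda>\<mu>. a \<mu> _"] Im_sum_NN_hermitian[of "a _"]
    by simp
qed

lemma dissipation_eq: "dissipation a = - (\<Sum>\<mu>\<in>Lt. \<Sum>\<kappa>\<in>Lt. damping \<mu> \<kappa> * (cmod (a \<mu> \<kappa>))\<^sup>2)"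
proof -
  let ?H = "\<lambda>\<mu> \<kappa>. (\<Sum>\<xi>\<in>NN N \<mu>. a \<xi> \<kappa>) - (\<Sum>\<xi>\<in>NN N \<kappa>. a \<mu> \<xi>)"
  have entry: "Re (cnj (a \<mu> \<kappa>) * lind_op a \<mu> \<kappa>)
      = - Im (cnj (a \<mu> \<kappa>) * ?H \<mu> \<kappa>) - damping \<mu> \<kappa> * (cmod (a \<mu> \<kappa>))\<^sup>2"
    if "\<mu> \<in> Lt" "\<kappa> \<in> Lt" for \<mu> \<kappa>
  proof -
    have sq: "cnj (a \<mu> \<kappa>) * a \<mu> \<kappa> = of_real ((cmod (a \<mu> \<kappa>))\<^sup>2)"
      by (metis complex_norm_square mult.commute)
    have deph: "cnj (a \<mu> \<kappa>) * (of_bool (\<mu> = \<kappa> \<and> \<mu> \<in> Lt) * a \<mu> \<mu> - a \<mu> \<kappa>)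
        = - of_real (of_bool (\<mu> \<noteq> \<kappa>) * (cmod (a \<mu> \<kappa>))\<^sup>2)"
      using that sq by (cases "\<mu> = \<kappa>") (auto simp: algebra_simps)
    have "cnj (a \<mu> \<kappa>) * lind_op a \<mu> \<kappa> = \<i> * (cnj (a \<mu> \<kappa>) * ?H \<mu> \<kappa>)
       - of_real zl * ((of_bool (\<mu> \<in> S1) + of_bool (\<kappa> \<in> S1)) * (cnj (a \<mu> \<kappa>) * a \<mu> \<kappa>))
       - of_real zr * ((of_bool (\<mu> \<in> SN) + of_bool (\<kappa> \<in> SN)) * (cnj (a \<mu> \<kappa>) * a \<mu> \<kappa>))
       + of_real b * (cnj (a \<mu> \<kappa>) * (of_bool (\<mu> = \<kappa> \<and> \<mu> \<in> Lt) * a \<mu> \<mu> - a \<mu> \<kappa>))"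
      unfolding lind_op_alt using that by (simp add: algebra_simps)
    also have "\<dots> = \<i> * (cnj (a \<mu> \<kappa>) * ?H \<mu> \<kappa>) - of_real (damping \<mu> \<kappa> * (cmod (a \<mu> \<kappa>))\<^sup>2)"
      unfolding deph sq damping_def by (simp add: algebra_simps)
    finally show ?thesis by simp
  qed
  have "dissipation a = (\<Sum>\<mu>\<in>Lt. \<Sum>\<kappa>\<in>Lt. - Im (cnj (a \<mu> \<kappa>) * ?H \<mu> \<kappa>)
                                         - damping \<mu> \<kappa> * (cmod (a \<mu> \<kappa>))\<^sup>2)"
    unfolding dissipation_def Re_sum by (intro sum.cong refl entry) auto
  also have "\<dots> = - Im (\<Sum>\<mu>\<in>Lt. \<Sum>\<kappa>\<in>Lt. cnj (a \<mu> \<kappa>) * ?H \<mu> \<kappa>)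
                 - (\<Sum>\<mu>\<in>Lt. \<Sum>\<kappa>\<in>Lt. damping \<mu> \<kappa> * (cmod (a \<mu> \<kappa>))\<^sup>2)"
    by (simp add: sum_subtractf sum_negf)
  finally show ?thesis using Im_hopping_form_eq_0[of a] by simp
qed

lemma dissipation_nonpos: "dissipation a \<le> 0"
  unfolding dissipation_eq using damping_nonneg by (auto intro!: sum_nonneg)

lemma dissipation_eq_0_imp_left_slab_zero:
  assumes "dissipation a = 0" "\<mu> \<in> S1" "\<kappa> \<in> Lt"
  shows "a \<mu> \<kappa> = 0"
proof -
  have nonneg: "0 \<le> damping \<mu> \<kappa> * (cmod (a \<mu> \<kappa>))\<^sup>2" for \<mu> \<kappa> using damping_nonneg by simp
  have "\<mu> \<in> Lt" using assms slab_subset_lattice by auto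
  moreover have "(\<Sum>\<mu>\<in>Lt. \<Sum>\<kappa>\<in>Lt. damping \<mu> \<kappa> * (cmod (a \<mu> \<kappa>))\<^sup>2) = 0"
    using assms(1) dissipation_eq by simp
  ultimately have "(\<Sum>\<kappa>\<in>Lt. damping \<mu> \<kappa> * (cmod (a \<mu> \<kappa>))\<^sup>2) = 0"
    using finite_lattice nonneg
    by (subst (asm) sum_nonneg_eq_0_iff) (auto intro: sum_nonneg)
  then have "damping \<mu> \<kappa> * (cmod (a \<mu> \<kappa>))\<^sup>2 = 0"
    using assms(3) finite_lattice nonneg by (subst (asm) sum_nonneg_eq_0_iff) auto
  moreover have "damping \<mu> \<kappa> \<ge> zl" using assms(2) zl_pos zr_pos b_nonneg unfolding damping_def by simp
  ultimately show ?thesis using zl_pos by simp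
qed

lemma has_real_derivative_hs_norm2_flow:
  assumes "\<And>\<mu> \<kappa>. ((\<lambda>t. z t \<mu> \<kappa>) has_vector_derivative lind_op (z t) \<mu> \<kappa>) (at t)"
  shows "((\<lambda>t. hs_norm2 (z t)) has_real_derivative 2 * dissipation (z t)) (at t)"
  using has_real_derivative_hs_norm2[OF assms] unfolding dissipation_def .

lemma flow_from_zero_stays_zero:
  assumes deriv: "\<And>t \<mu> \<kappa>. ((\<lambda>t. z t \<mu> \<kappa>) has_vector_derivative lind_op (z t) \<mu> \<kappa>) (at t)"
    and "\<And>t. supported (z t)" and "z 0 = (\<lambda>_ _. 0)" and "t \<ge> 0"
  shows "z t = (\<lambda>_ _. 0)"
proof -
  have "hs_norm2 (z t) \<le> hs_norm2 (z 0)"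
    using \<open>t \<ge> 0\<close> by (intro DERIV_nonpos_imp_nonincreasing[of 0 t "\<lambda>t. hs_norm2 (z t)"])
      (auto intro!: exI[of _ "2 * dissipation (z _)"] has_real_derivative_hs_norm2_flow deriv
        dissipation_nonpos simp: mult_le_0_iff)
  also have "hs_norm2 (z 0) = 0" using assms(3) by (simp add: hs_norm2_def)
  finally show ?thesis using hs_norm2_nonneg[of "z t"] hs_norm2_eq_0_iff assms(2) by auto
qed

lemma evol_add_time:
  assumes sa: "supported a" and "s \<ge> 0"
  shows "evol (s + t) a = evol s (evol t a)"
proof -
  define z where "z = (\<lambda>s. \<lambda>\<mu> \<kappa>. evol (s + t) a \<mu> \<kappa> - evol s (evol t a) \<mu> \<kappa>)"
  have st: "supported (evol t a)" by (rule supported_evol[OF sa])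
  have shifted: "((\<lambda>s. evol (s + t) a \<mu> \<kappa>) has_vector_derivative lind_op (evol (s + t) a) \<mu> \<kappa>) (at s)"
    for s \<mu> \<kappa>
  proof -
    have "((\<lambda>s. s + t) has_vector_derivative 1) (at s)"
      by (auto intro!: derivative_eq_intros
          simp: has_real_derivative_iff_has_vector_derivative[symmetric])
    from vector_diff_chain_at[OF this has_vector_derivative_evol_flow[OF sa, of \<mu> \<kappa> "s + t"]]
    show ?thesis by (simp add: o_def)
  qed
  have "((\<lambda>s. z s \<mu> \<kappa>) has_vector_derivative lind_op (z s) \<mu> \<kappa>) (at s)" for s \<mu> \<kappa>
    unfolding z_def lind_op_diff
    by (intro has_vector_derivative_diff shifted has_vector_derivative_evol_flow st)
  moreover have "supported (z s)" for s unfolding z_def by (intro supported_diff supported_evol sa st)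
  moreover have "z 0 = (\<lambda>_ _. 0)" unfolding z_def by (simp add: evol_at_0)
  ultimately have "z s = (\<lambda>_ _. 0)" using flow_from_zero_stays_zero \<open>s \<ge> 0\<close> by blast
  then show ?thesis unfolding z_def by (intro ext) (metis right_minus_eq)
qed

lemma hs_norm2_evol_antimono:
  assumes "supported a" "s \<le> t"
  shows "hs_norm2 (evol t a) \<le> hs_norm2 (evol s a)"
  using assms(2) by (intro DERIV_nonpos_imp_nonincreasing[of s t "\<lambda>t. hs_norm2 (evol t a)"])
    (auto intro!: exI[of _ "2 * dissipation (evol _ a)"] has_real_derivative_hs_norm2_flow
      has_vector_derivative_evol_flow assms(1) dissipation_nonpos simp: mult_le_0_iff)

section \<open>Exponential decay of the evolution\<close>

lemma lind_op_at_vanishing_row: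
  assumes "\<mu> \<in> Lt" "\<And>\<xi>. y \<mu> \<xi> = 0"
  shows "lind_op y \<mu> \<kappa> = \<i> * (\<Sum>\<xi>\<in>NN N \<mu>. y \<xi> \<kappa>)"
  using assms unfolding lind_op_alt by simp

text \<open>Row \<open>\<mu>\<close> stays zero, so its time derivative \<open>i \<Sum>\<^sub>\<xi> y \<xi> \<kappa>\<close> over the neighbours vanishes;
  all neighbours but \<open>\<mu>\<^sub>+\<close> lie in rows that are already known to be zero.\<close>

lemma evol_shift_row_eq_0:
  assumes sx: "supported x" and m: "\<mu> \<in> Lt" and sm: "shift \<mu> \<in> Lt"
    and lower: "\<And>\<sigma> \<xi> \<kappa>. \<sigma> \<in> {0<..<1} \<Longrightarrow> \<xi> \<in> Lt \<Longrightarrow> \<xi>!0 \<le> \<mu>!0 \<Longrightarrow> evol \<sigma> x \<xi> \<kappa> = 0"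
    and s: "s \<in> {0<..<1}"
  shows "evol s x (shift \<mu>) \<kappa> = 0"
proof -
  have "lind_op (evol s x) \<mu> \<kappa> = 0"
    using lower m by (intro has_vector_derivative_zero_on_open[OF
          has_vector_derivative_evol_flow[OF sx] open_greaterThanLessThan s]) auto
  also have "lind_op (evol s x) \<mu> \<kappa> = \<i> * (\<Sum>\<xi>\<in>NN N \<mu>. evol s x \<xi> \<kappa>)"
    using lower[OF s m] by (intro lind_op_at_vanishing_row m) auto
  also have "(\<Sum>\<xi>\<in>NN N \<mu>. evol s x \<xi> \<kappa>)
      = (\<Sum>\<xi>\<in>NN N \<mu>. if \<xi> = shift \<mu> then evol s x (shift \<mu>) \<kappa> else 0)"
  proof (intro sum.cong refl)
    fix \<xi> assume xi: "\<xi> \<in> NN N \<mu>"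
    show "evol s x \<xi> \<kappa> = (if \<xi> = shift \<mu> then evol s x (shift \<mu>) \<kappa> else 0)"
    proof (cases "\<xi>!0 \<le> \<mu>!0")
      case True
      then show ?thesis
        using lower[OF s _ True] xi NN_subset_lattice shift_nth[OF m, of 0] by auto
    next
      case False
      then have "\<xi> = shift \<mu>" using NN_first_cases[OF xi] NN_up_eq_shift[OF m xi] by auto
      then show ?thesis by simp
    qed
  qed
  also have "\<dots> = evol s x (shift \<mu>) \<kappa>" using finite_NN shift_in_NN[OF m sm] by simp
  finally show ?thesis by simp
qed

lemma evol_eq_0_of_no_dissipation:
  assumes sx: "supported x" and dis0: "\<And>s. s \<in> {0<..<1} \<Longrightarrow> dissipation (evol s x) = 0"
    and s: "s \<in> {0<..<1}"
  shows "evol s x \<mu> \<kappa> = 0"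
proof -
  have outside: "evol \<sigma> x \<xi> \<kappa> = 0" if "\<xi> \<notin> Lt \<or> \<kappa> \<notin> Lt" for \<sigma> \<xi> \<kappa>
    using supported_evol[OF sx] that unfolding supported_def by blast
  have rows: "evol \<sigma> x \<xi> \<kappa> = 0" if "\<sigma> \<in> {0<..<1}" "\<xi> \<in> Lt" "\<xi>!0 \<le> Suc k" for k \<sigma> \<xi> \<kappa>
    using that
  proof (induction k arbitrary: \<sigma> \<xi> \<kappa>)
    case 0
    then have "\<xi> \<in> S1" using first_bounds[of \<xi>] by (auto simp: slab_def)
    then show ?case
      using dissipation_eq_0_imp_left_slab_zero[OF dis0[OF 0(1)]] outside by blast
  next
    case (Suc k)
    show ?case
    proof (cases "\<xi>!0 \<le> Suc k")
      case True
      then show ?thesis using Suc by blast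
    next
      case False
      then have "\<xi>!0 = Suc (Suc k)" using Suc.prems by simp
      then have u: "unshift \<xi> \<in> Lt" "unshift \<xi> ! 0 = Suc k"
        using unshift_in_lattice_iff[OF Suc.prems(2)] unshift_nth[OF Suc.prems(2), of 0] by auto
      have "evol \<sigma> x (shift (unshift \<xi>)) \<kappa> = 0"
        using Suc.IH u Suc.prems shift_unshift by (intro evol_shift_row_eq_0[OF sx u(1)]) auto
      then show ?thesis using shift_unshift[OF Suc.prems(2)] by simp
    qed
  qed
  show ?thesis
  proof (cases "\<mu> \<in> Lt")
    case True
    then show ?thesis using rows[OF s True, of "N!0"] first_bounds[OF True] by simp
  qed (use outside in blast)
qed

lemma hs_norm2_evol_1_less:
  assumes sx: "supported x" and nonzero: "x \<noteq> (\<lambda>_ _. 0)"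
  shows "hs_norm2 (evol 1 x) < hs_norm2 x"
proof (rule ccontr)
  assume "\<not> ?thesis"
  then have const: "hs_norm2 (evol s x) = hs_norm2 x" if "0 \<le> s" "s \<le> 1" for s
    using hs_norm2_evol_antimono[OF sx, of s 1] hs_norm2_evol_antimono[OF sx, of 0 s] that
    by (simp add: evol_at_0)
  have "dissipation (evol s x) = 0" if s: "s \<in> {0<..<1}" for s
  proof -
    have "((\<lambda>t. hs_norm2 (evol t x)) has_real_derivative 2 * dissipation (evol s x)) (at s)"
      by (intro has_real_derivative_hs_norm2_flow has_vector_derivative_evol_flow sx)
    then have "2 * dissipation (evol s x) = 0"
      by (rule DERIV_local_const[of _ _ _ "min s (1 - s)"]) (use s in \<open>auto simp: const\<close>)
    then show ?thesis by simp
  qed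
  then have vanish: "evol s x \<mu> \<kappa> = 0" if "s \<in> {0<..<1}" for s \<mu> \<kappa>
    using evol_eq_0_of_no_dissipation[OF sx] that by blast
  have "evol 0 x \<mu> \<kappa> = 0" for \<mu> \<kappa>
  proof (rule continuous_constant_on_closure[of "{0<..<1}" "\<lambda>s. evol s x \<mu> \<kappa>"])
    show "continuous_on (closure {0<..<1}) (\<lambda>s. evol s x \<mu> \<kappa>)" by (rule continuous_on_evol[OF sx])
    show "0 \<in> closure {0<..<1::real}" by simp
  qed (rule vanish)
  then have "x = (\<lambda>_ _. 0)" unfolding evol_at_0 by (intro ext)
  with nonzero show False by contradiction
qed

definition mat_unit :: "site \<times> site \<Rightarrow> cmat" where
  "mat_unit p = (\<lambda>\<mu> \<kappa>. if \<mu> = fst p \<and> \<kappa> = snd p then 1 else 0)"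

lemma supported_mat_unit: "p \<in> Lt \<times> Lt \<Longrightarrow> supported (mat_unit p)"
  unfolding supported_def mat_unit_def by auto

lemma evol_eq_sum_mat_unit:
  assumes sx: "supported x"
  shows "evol t x = (\<lambda>\<mu> \<kappa>. \<Sum>p\<in>Lt \<times> Lt. x (fst p) (snd p) * evol t (mat_unit p) \<mu> \<kappa>)"
proof -
  have "x = (\<lambda>\<mu> \<kappa>. \<Sum>p\<in>Lt \<times> Lt. x (fst p) (snd p) * mat_unit p \<mu> \<kappa>)"
  proof (intro ext)
    fix \<mu> \<kappa>
    have "(\<Sum>p\<in>Lt \<times> Lt. x (fst p) (snd p) * mat_unit p \<mu> \<kappa>)
        = (\<Sum>p\<in>Lt \<times> Lt. if p = (\<mu>, \<kappa>) then x \<mu> \<kappa> else 0)"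
      unfolding mat_unit_def by (intro sum.cong refl) auto
    also have "\<dots> = x \<mu> \<kappa>" using sx finite_lattice unfolding supported_def by auto
    finally show "x \<mu> \<kappa> = (\<Sum>p\<in>Lt \<times> Lt. x (fst p) (snd p) * mat_unit p \<mu> \<kappa>)" by simp
  qed
  then have "evol t x = evol t (\<lambda>\<mu> \<kappa>. \<Sum>p\<in>Lt \<times> Lt. x (fst p) (snd p) * mat_unit p \<mu> \<kappa>)"
    by simp
  also have "\<dots> = (\<lambda>\<mu> \<kappa>. \<Sum>p\<in>Lt \<times> Lt. x (fst p) (snd p) * evol t (mat_unit p) \<mu> \<kappa>)"
    using finite_lattice
    by (simp add: evol_sum supported_scale supported_mat_unit evol_scale)
  finally show ?thesis .
qed

definition hs_unit_sphere :: "cmat set" where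
  "hs_unit_sphere = {x. supported x \<and> hs_norm2 x = 1}"

lemma compact_hs_unit_sphere: "compact hs_unit_sphere"
proof -
  define box :: "cmat set" where
    "box = PiE UNIV (\<lambda>\<mu>. PiE UNIV (\<lambda>\<kappa>. if \<mu> \<in> Lt \<and> \<kappa> \<in> Lt then cball 0 1 else {0}))"
  have "compact box" unfolding box_def by (intro compact_PiE_UNIV) auto
  have "{x::cmat. supported x}
      = (\<Inter>p\<in>{p. fst p \<notin> Lt \<or> snd p \<notin> Lt}. {x. x (fst p) (snd p) = 0})"
    unfolding supported_def by auto
  also have "closed \<dots>"
    by (intro closed_INT ballI closed_Collect_eq continuous_on_entry continuous_on_const)
  finally have closed_supported: "closed {x::cmat. supported x}" .
  have closed_norm: "closed {x::cmat. hs_norm2 x = 1}"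
    by (intro closed_Collect_eq continuous_on_hs_norm2 continuous_on_const)
  have "hs_unit_sphere \<subseteq> box"
  proof
    fix x assume "x \<in> hs_unit_sphere"
    then have "supported x" "hs_norm2 x = 1" by (auto simp: hs_unit_sphere_def)
    then have "cmod (x \<mu> \<kappa>) \<le> 1" for \<mu> \<kappa> using cmod_le_sqrt_hs_norm2 by fastforce
    then show "x \<in> box" unfolding box_def using \<open>supported x\<close> unfolding supported_def by auto
  qed
  then have "hs_unit_sphere = box \<inter> ({x. supported x} \<inter> {x. hs_norm2 x = 1})"
    unfolding hs_unit_sphere_def by auto
  then show ?thesis
    using compact_Int_closed[OF \<open>compact box\<close> closed_Int[OF closed_supported closed_norm]] by simp
qed

lemma hs_unit_sphere_nonempty: "hs_unit_sphere \<noteq> {}"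
proof -
  define \<nu> where "\<nu> = replicate (length N) (1::nat)"
  have \<nu>: "\<nu> \<in> Lt" using N_pos unfolding \<nu>_def lattice_def by auto
  have "hs_norm2 (mat_unit (\<nu>, \<nu>)) = (\<Sum>\<mu>\<in>Lt. \<Sum>\<kappa>\<in>Lt. if \<mu> = \<nu> \<and> \<kappa> = \<nu> then 1 else 0)"
    unfolding hs_norm2_def mat_unit_def by (intro sum.cong refl) auto
  also have "\<dots> = (\<Sum>\<mu>\<in>Lt. if \<mu> = \<nu> then 1 else 0)"
    using \<nu> finite_lattice by (intro sum.cong refl) auto
  also have "\<dots> = 1" using \<nu> finite_lattice by simp
  finally have "hs_norm2 (mat_unit (\<nu>, \<nu>)) = 1" .
  then show ?thesis using \<nu> supported_mat_unit[of "(\<nu>, \<nu>)"] unfolding hs_unit_sphere_def by auto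
qed

lemma hs_norm2_evol_1_contraction:
  obtains q where "q < 1" "\<And>a. supported a \<Longrightarrow> hs_norm2 (evol 1 a) \<le> q * hs_norm2 a"
proof -
  have "continuous_on hs_unit_sphere (\<lambda>x. hs_norm2 (\<lambda>\<mu> \<kappa>. \<Sum>p\<in>Lt \<times> Lt.
           x (fst p) (snd p) * evol 1 (mat_unit p) \<mu> \<kappa>))"
    unfolding hs_norm2_def by (intro continuous_intros continuous_on_entry)
  then have "continuous_on hs_unit_sphere (\<lambda>x. hs_norm2 (evol 1 x))"
    by (rule continuous_on_cong[THEN iffD1, rotated 2])
      (auto simp: hs_unit_sphere_def evol_eq_sum_mat_unit)
  then obtain x0 where x0: "x0 \<in> hs_unit_sphere"
    and max: "\<And>y. y \<in> hs_unit_sphere \<Longrightarrow> hs_norm2 (evol 1 y) \<le> hs_norm2 (evol 1 x0)"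
    using continuous_attains_sup[OF compact_hs_unit_sphere hs_unit_sphere_nonempty] by blast
  define q where "q = hs_norm2 (evol 1 x0)"
  have "x0 \<noteq> (\<lambda>_ _. 0)" using x0 by (auto simp: hs_unit_sphere_def hs_norm2_def)
  then have "q < 1" using hs_norm2_evol_1_less[of x0] x0 unfolding q_def hs_unit_sphere_def by auto
  moreover have "hs_norm2 (evol 1 a) \<le> q * hs_norm2 a" if sa: "supported a" for a
  proof (cases "hs_norm2 a = 0")
    case True
    then show ?thesis using sa evol_scale[OF sa, of 1 0] hs_norm2_eq_0_iff by (auto simp: hs_norm2_def)
  next
    case False
    then have pos: "hs_norm2 a > 0" using hs_norm2_nonneg[of a] by simp
    define c where "c = 1 / sqrt (hs_norm2 a)"
    have c2: "c\<^sup>2 * hs_norm2 a = 1" unfolding c_def using pos by (simp add: power_divide)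
    have "(\<lambda>\<mu> \<kappa>. complex_of_real c * a \<mu> \<kappa>) \<in> hs_unit_sphere"
      using c2 sa by (simp add: hs_unit_sphere_def hs_norm2_scale supported_scale)
    then have "c\<^sup>2 * hs_norm2 (evol 1 a) \<le> q"
      using max unfolding q_def by (fastforce simp: evol_scale[OF sa] hs_norm2_scale)
    then have "c\<^sup>2 * hs_norm2 (evol 1 a) * hs_norm2 a \<le> q * hs_norm2 a"
      using pos by (intro mult_right_mono) auto
    moreover have "c\<^sup>2 * hs_norm2 (evol 1 a) * hs_norm2 a = hs_norm2 (evol 1 a)"
      using c2 by (metis mult.commute mult.left_commute mult_1_right)
    ultimately show ?thesis by simp
  qed
  ultimately show ?thesis using that by blast
qed

lemma evol_exponential_decay:
  assumes sa: "supported a"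
  obtains C c where "c > 0" "\<And>t \<mu> \<kappa>. t \<ge> 0 \<Longrightarrow> cmod (evol t a \<mu> \<kappa>) \<le> C * exp (- c * t)"
proof -
  obtain q where "q < 1" and q: "\<And>a. supported a \<Longrightarrow> hs_norm2 (evol 1 a) \<le> q * hs_norm2 a"
    using hs_norm2_evol_1_contraction by blast
  have "hs_norm2 (evol (t + 1) a) \<le> q * hs_norm2 (evol t a)" if "t \<ge> 0" for t
    using q[OF supported_evol[OF sa]] evol_add_time[OF sa, of 1 t] by (simp add: add.commute)
  then have "\<exists>C c. c > 0 \<and> (\<forall>t\<ge>0. hs_norm2 (evol t a) \<le> C * exp (- c * t))"
    using hs_norm2_evol_antimono[OF sa, of 0] \<open>q < 1\<close>
    by (intro exponential_decay_of_unit_step_contraction hs_norm2_nonneg) (auto simp: evol_at_0)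
  then obtain C c where "c > 0" and decay: "\<And>t. t \<ge> 0 \<Longrightarrow> hs_norm2 (evol t a) \<le> C * exp (- c * t)"
    by blast
  have "cmod (evol t a \<mu> \<kappa>) \<le> sqrt C * exp (- (c / 2) * t)" if "t \<ge> 0" for t \<mu> \<kappa>
  proof -
    have square: "exp (- c * t) = (exp (- (c / 2) * t))\<^sup>2"
      by (simp add: power2_eq_square flip: exp_add)
    have "cmod (evol t a \<mu> \<kappa>) \<le> sqrt (C * exp (- c * t))"
      using cmod_le_sqrt_hs_norm2[OF supported_evol[OF sa]] decay[OF that]
      by (meson order_trans real_sqrt_le_mono)
    then show ?thesis unfolding square by (simp add: real_sqrt_mult)
  qed
  then show ?thesis using that \<open>c > 0\<close> by (metis half_gt_zero)
qed

lemma integral_evol_eq: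
  assumes sR: "supported R" and sS: "supported S" and stat: "lind_op R = (\<lambda>\<mu> \<kappa>. - S \<mu> \<kappa>)"
  shows "integral {0..} (\<lambda>t. evol t S \<mu> \<kappa>) = R \<mu> \<kappa>"
proof -
  have "evol t (lind_op R) = (\<lambda>\<mu> \<kappa>. - evol t S \<mu> \<kappa>)" for t
    using evol_scale[OF sS, of t "-1"] unfolding stat by simp
  then have deriv: "((\<lambda>t. evol t R \<mu> \<kappa>) has_vector_derivative - evol t S \<mu> \<kappa>) (at t within {0..})"
    for t using has_vector_derivative_evol[OF sR, of \<mu> \<kappa> t] by simp
  obtain C c where "c > 0" and bound: "\<And>t. t \<ge> 0 \<Longrightarrow> cmod (evol t S \<mu> \<kappa>) \<le> C * exp (- c * t)"
    using evol_exponential_decay[OF sS] by metis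
  obtain C' c' where "c' > 0" "\<And>t. t \<ge> 0 \<Longrightarrow> cmod (evol t R \<mu> \<kappa>) \<le> C' * exp (- c' * t)"
    using evol_exponential_decay[OF sR] by metis
  then have "((\<lambda>t. evol t R \<mu> \<kappa>) \<longlongrightarrow> 0) at_top"
    by (intro Lim_null_comparison[OF _ exp_neg_tendsto_0] eventually_at_top_linorderI) auto
  then show ?thesis
    using integral_atLeast_0_of_decaying_antiderivative[of "\<lambda>t. evol t R \<mu> \<kappa>"
        "\<lambda>t. evol t S \<mu> \<kappa>" C c] deriv bound \<open>c > 0\<close>
    by (simp add: evol_at_0)
qed

section \<open>The stationary state\<close>

definition ansatz :: "(nat \<Rightarrow> complex) \<Rightarrow> complex \<Rightarrow> cmat" where
  "ansatz x y = (\<lambda>\<mu> \<kappa>. if \<mu> \<in> Lt \<and> \<kappa> \<in> Lt then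
      (if \<mu> = \<kappa> then x (\<mu>!0) else if \<mu> = shift \<kappa> then y else if \<kappa> = shift \<mu> then - y else 0)
    else 0)"

lemma supported_ansatz: "supported (ansatz x y)"
  unfolding supported_def ansatz_def by auto

lemma shift_neq_unshift:
  assumes "\<kappa> \<in> Lt"
  shows "unshift \<kappa> \<noteq> shift \<kappa>"
proof -
  have "unshift \<kappa> ! 0 \<noteq> shift \<kappa> ! 0"
    using unshift_nth[OF assms, of 0] shift_nth[OF assms, of 0] by simp
  then show ?thesis by metis
qed

lemma unshift_neq:
  assumes "\<kappa> \<in> Lt"
  shows "unshift \<kappa> \<noteq> \<kappa>"
proof -
  have "unshift \<kappa> ! 0 \<noteq> \<kappa> ! 0"
    using unshift_nth[OF assms, of 0] first_bounds[OF assms] by auto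
  then show ?thesis by metis
qed

lemma eq_shift_iff_unshift:
  assumes "\<xi> \<in> Lt" "\<kappa> \<in> Lt"
  shows "\<kappa> = shift \<xi> \<longleftrightarrow> \<xi> = unshift \<kappa> \<and> unshift \<kappa> \<in> Lt"
  using unshift_shift[OF assms(1)] shift_unshift[OF assms(2)] assms by auto

lemma ansatz_col:
  assumes "\<xi> \<in> Lt" "\<kappa> \<in> Lt"
  shows "ansatz x y \<xi> \<kappa> = (if \<xi> = \<kappa> then x (\<kappa>!0) else 0) + (if \<xi> = shift \<kappa> then y else 0)
     + (if \<xi> = unshift \<kappa> \<and> unshift \<kappa> \<in> Lt then - y else 0)"
proof -
  have "shift \<kappa> \<noteq> \<kappa>" "unshift \<kappa> \<noteq> shift \<kappa>" "unshift \<kappa> \<in> Lt \<Longrightarrow> unshift \<kappa> \<noteq> \<kappa>"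
    using assms(2) shift_neq shift_neq_unshift unshift_neq by auto
  then show ?thesis unfolding ansatz_def using assms eq_shift_iff_unshift[OF assms] by auto
qed

lemma ansatz_row:
  assumes "\<mu> \<in> Lt" "\<xi> \<in> Lt"
  shows "ansatz x y \<mu> \<xi> = (if \<xi> = \<mu> then x (\<mu>!0) else 0)
     + (if \<xi> = unshift \<mu> \<and> unshift \<mu> \<in> Lt then y else 0) + (if \<xi> = shift \<mu> then - y else 0)"
proof -
  have "shift \<mu> \<noteq> \<mu>" "unshift \<mu> \<noteq> shift \<mu>" "unshift \<mu> \<in> Lt \<Longrightarrow> unshift \<mu> \<noteq> \<mu>"
    using assms(1) shift_neq shift_neq_unshift unshift_neq by auto
  then show ?thesis unfolding ansatz_def using assms eq_shift_iff_unshift[OF assms(2,1)] by auto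
qed

lemma sum_NN_delta: "(\<Sum>\<xi>\<in>NN N \<mu>. if \<xi> = c then v else 0) = (if c \<in> NN N \<mu> then v else 0)"
  using finite_NN by simp

lemma sum_NN_delta_lattice:
  "(\<Sum>\<xi>\<in>NN N \<mu>. if \<xi> = c \<and> c \<in> Lt then v else 0) = (if c \<in> NN N \<mu> then v else 0)"
proof -
  have "(\<Sum>\<xi>\<in>NN N \<mu>. if \<xi> = c \<and> c \<in> Lt then v else 0) = (\<Sum>\<xi>\<in>NN N \<mu>. if \<xi> = c then v else 0)"
    using NN_subset_lattice by (intro sum.cong refl) auto
  then show ?thesis by (simp add: sum_NN_delta)
qed

lemma sum_NN_ansatz_col:
  assumes "\<mu> \<in> Lt" "\<kappa> \<in> Lt"
  shows "(\<Sum>\<xi>\<in>NN N \<mu>. ansatz x y \<xi> \<kappa>) = (if \<kappa> \<in> NN N \<mu> then x (\<kappa>!0) else 0)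
     + (if shift \<kappa> \<in> NN N \<mu> then y else 0) + (if unshift \<kappa> \<in> NN N \<mu> then - y else 0)"
proof -
  have "(\<Sum>\<xi>\<in>NN N \<mu>. ansatz x y \<xi> \<kappa>) = (\<Sum>\<xi>\<in>NN N \<mu>. (if \<xi> = \<kappa> then x (\<kappa>!0) else 0)
     + (if \<xi> = shift \<kappa> then y else 0) + (if \<xi> = unshift \<kappa> \<and> unshift \<kappa> \<in> Lt then - y else 0))"
    using NN_subset_lattice assms by (intro sum.cong refl ansatz_col) auto
  then show ?thesis by (simp only: sum.distrib sum_NN_delta sum_NN_delta_lattice)
qed

lemma sum_NN_ansatz_row:
  assumes "\<mu> \<in> Lt" "\<kappa> \<in> Lt"
  shows "(\<Sum>\<xi>\<in>NN N \<kappa>. ansatz x y \<mu> \<xi>) = (if \<mu> \<in> NN N \<kappa> then x (\<mu>!0) else 0)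
     + (if unshift \<mu> \<in> NN N \<kappa> then y else 0) + (if shift \<mu> \<in> NN N \<kappa> then - y else 0)"
proof -
  have "(\<Sum>\<xi>\<in>NN N \<kappa>. ansatz x y \<mu> \<xi>) = (\<Sum>\<xi>\<in>NN N \<kappa>. (if \<xi> = \<mu> then x (\<mu>!0) else 0)
     + (if \<xi> = unshift \<mu> \<and> unshift \<mu> \<in> Lt then y else 0) + (if \<xi> = shift \<mu> then - y else 0))"
    using NN_subset_lattice assms by (intro sum.cong refl ansatz_row) auto
  then show ?thesis by (simp only: sum.distrib sum_NN_delta sum_NN_delta_lattice)
qed

lemma neg_ham_comm_ansatz_diag:
  assumes "\<mu> \<in> Lt"
  shows "neg_ham_comm (ansatz x y) \<mu> \<mu> = 2 * y * (of_bool (\<mu>!0 < N!0) - of_bool (\<mu>!0 \<ge> 2))"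
  unfolding neg_ham_comm_def
  using assms sum_NN_ansatz_col[OF assms assms] sum_NN_ansatz_row[OF assms assms]
    shift_in_NN_iff[OF assms] unshift_in_NN_iff[OF assms] not_in_NN_self
  by simp

lemma neg_ham_comm_ansatz_off:
  assumes m: "\<mu> \<in> Lt" and k: "\<kappa> \<in> Lt" and ne: "\<mu> \<noteq> \<kappa>"
  shows "neg_ham_comm (ansatz x y) \<mu> \<kappa> = (if \<kappa> = shift \<mu> then x (\<mu>!0 + 1) - x (\<mu>!0)
      else if \<mu> = shift \<kappa> then x (\<kappa>!0) - x (\<kappa>!0 + 1) else 0)"
proof -
  have "neg_ham_comm (ansatz x y) \<mu> \<kappa> = (if \<kappa> \<in> NN N \<mu> then x (\<kappa>!0) - x (\<mu>!0) else 0)"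
  proof -
    have "shift \<kappa> \<in> NN N \<mu> \<longleftrightarrow> unshift \<mu> \<in> NN N \<kappa>"
      and "shift \<mu> \<in> NN N \<kappa> \<longleftrightarrow> unshift \<kappa> \<in> NN N \<mu>"
      and "\<mu> \<in> NN N \<kappa> \<longleftrightarrow> \<kappa> \<in> NN N \<mu>"
      using shift_in_NN_iff_unshift_in_NN[OF m k ne] shift_in_NN_iff_unshift_in_NN[OF k m] ne
        NN_sym_iff[OF m k] by auto
    then show ?thesis
      unfolding neg_ham_comm_def using m k sum_NN_ansatz_col[OF m k] sum_NN_ansatz_row[OF m k]
      by simp
  qed
  also have "\<dots> = (if \<kappa> = shift \<mu> then x (\<mu>!0 + 1) - x (\<mu>!0)
      else if \<mu> = shift \<kappa> then x (\<kappa>!0) - x (\<kappa>!0 + 1) else 0)"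
    by (rule NN_difference_first_coord[OF m k])
  finally show ?thesis .
qed

definition denom :: real where
  "denom = (b * (real (N!0) - 1) + zl + zr) * zl * zr + zl + zr"

lemma denom_pos: "denom > 0"
proof -
  have "0 \<le> b * (real (N!0) - 1)" using b_nonneg N0_ge_2 by simp
  then have "0 < (b * (real (N!0) - 1) + zl + zr) * zl * zr" using zl_pos zr_pos by simp
  then show ?thesis unfolding denom_def using zl_pos zr_pos by linarith
qed

definition flux :: "real \<Rightarrow> real \<Rightarrow> real" where
  "flux ail air = (ail * zr - air * zl) / denom"

definition density :: "real \<Rightarrow> real \<Rightarrow> nat \<Rightarrow> real" where
  "density ail air k = (ail - flux ail air) / zl
     - flux ail air * (b * (real k - 1) + (if k \<ge> 2 then zl else 0) + (if k = N!0 then zr else 0))"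

lemma density_left: "zl * density ail air 1 = ail - flux ail air"
  unfolding density_def using zl_pos N0_ge_2 by (simp add: field_simps)

lemma density_right: "zr * density ail air (N!0) = air + flux ail air"
proof -
  let ?j = "flux ail air"
  have j: "?j * denom = ail * zr - air * zl" unfolding flux_def using denom_pos by simp
  have "zl * (zr * density ail air (N!0))
      = zr * (ail - ?j) - zl * zr * ?j * (b * (real (N!0) - 1) + zl + zr)"
    unfolding density_def using zl_pos N0_ge_2 by (simp add: field_simps)
  also have "\<dots> = zl * (air + ?j)" using j unfolding denom_def by (simp add: algebra_simps)
  finally show ?thesis using zl_pos by simp
qed

lemma density_step:
  assumes "1 \<le> k" "k < N!0"
  shows "density ail air k - density ail air (k + 1)
    = flux ail air * (b + (if k = 1 then zl else 0) + (if k + 1 = N!0 then zr else 0))"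
proof (cases "k + 1 = N!0")
  case True
  then have r: "real (N!0) = real k + 1" by simp
  show ?thesis unfolding density_def using assms True by (cases "k = 1") (auto simp: r algebra_simps)
next
  case False
  then show ?thesis unfolding density_def using assms by (cases "k = 1") (auto simp: algebra_simps)
qed

definition stationary :: "real \<Rightarrow> real \<Rightarrow> cmat" where
  "stationary ail air = ansatz (\<lambda>k. of_real (density ail air k)) (\<i> * of_real (flux ail air))"

definition source :: "real \<Rightarrow> real \<Rightarrow> cmat" where
  "source ail air = (\<lambda>\<mu> \<kappa>. 2 * of_real ail * Pleft N \<mu> \<kappa> + 2 * of_real air * Pright N \<mu> \<kappa>)"

lemma supported_source: "supported (source ail air)"
  unfolding supported_def source_def Pleft_def Pright_def msum_proj_slab
  using slab_subset_lattice by auto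

lemma in_slab_iff: "\<mu> \<in> Lt \<Longrightarrow> \<mu> \<in> slab N i \<longleftrightarrow> \<mu>!0 = i"
  by (simp add: slab_def)

lemma lind_op_stationary_diag:
  assumes m: "\<mu> \<in> Lt"
  shows "lind_op (stationary ail air) \<mu> \<mu> = - source ail air \<mu> \<mu>"
proof -
  let ?j = "flux ail air" and ?x = "density ail air" and ?k = "\<mu>!0"
  have kb: "1 \<le> ?k" "?k \<le> N!0" using first_bounds[OF m] by auto
  have L: "lind_op (stationary ail air) \<mu> \<mu>
      = \<i> * (2 * (\<i> * of_real ?j) * (of_bool (?k < N!0) - of_bool (?k \<ge> 2)))
        - of_real zl * (2 * of_bool (?k = 1) * of_real (?x ?k))
        - of_real zr * (2 * of_bool (?k = N!0) * of_real (?x ?k))"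
    unfolding lind_op_def stationary_def neg_ham_comm_ansatz_diag[OF m]
    using m in_slab_iff[OF m] by (simp add: ansatz_def of_bool_def)
  have S: "source ail air \<mu> \<mu> = 2 * of_real ail * of_bool (?k = 1) + 2 * of_real air * of_bool (?k = N!0)"
    unfolding source_def Pleft_def Pright_def msum_proj_slab using in_slab_iff[OF m] m by simp
  consider "?k = 1" | "?k = N!0" | "?k \<noteq> 1" "?k \<noteq> N!0" by blast
  then show ?thesis
  proof cases
    case 1
    then have "lind_op (stationary ail air) \<mu> \<mu> = - 2 * of_real ?j - 2 * of_real (zl * ?x 1)"
      unfolding L using N0_ge_2 by (simp add: algebra_simps)
    then show ?thesis unfolding S density_left using 1 N0_ge_2 by simp
  next
    case 2
    then have "lind_op (stationary ail air) \<mu> \<mu> = 2 * of_real ?j - 2 * of_real (zr * ?x (N!0))"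
      unfolding L using N0_ge_2 by (simp add: algebra_simps)
    then show ?thesis unfolding S density_right using 2 N0_ge_2 by simp
  next
    case 3
    then show ?thesis unfolding L S using kb by simp
  qed
qed

lemma lind_op_off_diag:
  assumes "\<nu> \<in> Lt" "\<kappa> \<in> Lt" "\<nu> \<noteq> \<kappa>"
  shows "lind_op a \<nu> \<kappa> = \<i> * neg_ham_comm a \<nu> \<kappa>
      - (of_real zl * (of_bool (\<nu>!0 = 1) + of_bool (\<kappa>!0 = 1))
         + of_real zr * (of_bool (\<nu>!0 = N!0) + of_bool (\<kappa>!0 = N!0)) + of_real b) * a \<nu> \<kappa>"
  unfolding lind_op_def using assms in_slab_iff[OF assms(1)] in_slab_iff[OF assms(2)]
  by (simp add: of_bool_def algebra_simps)

lemma lind_op_stationary_shift: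
  assumes m: "\<mu> \<in> Lt" and sm: "shift \<mu> \<in> Lt"
  shows "lind_op (stationary ail air) \<mu> (shift \<mu>) = 0"
    and "lind_op (stationary ail air) (shift \<mu>) \<mu> = 0"
proof -
  let ?j = "flux ail air" and ?x = "density ail air" and ?k = "\<mu>!0"
  have kb: "1 \<le> ?k" "?k < N!0" using first_bounds[OF m] shift_in_lattice_iff[OF m] sm by auto
  have k1: "shift \<mu> ! 0 = ?k + 1" using shift_nth[OF m, of 0] by simp
  have ne: "\<mu> \<noteq> shift \<mu>" "\<mu> \<noteq> shift (shift \<mu>)"
    using shift_neq[OF m] shift_nth[OF sm, of 0] k1 by auto
  have step: "of_real (?x ?k) - of_real (?x (?k + 1))
      = (of_real (?j * (b + (if ?k = 1 then zl else 0) + (if ?k + 1 = N!0 then zr else 0))) :: complex)"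
    using density_step[OF kb, of ail air] by (metis of_real_diff)
  have up: "stationary ail air \<mu> (shift \<mu>) = - (\<i> * of_real ?j)"
    and down: "stationary ail air (shift \<mu>) \<mu> = \<i> * of_real ?j"
    unfolding stationary_def ansatz_def using m sm ne by auto
  have comm_up: "neg_ham_comm (stationary ail air) \<mu> (shift \<mu>)
      = - (of_real (?x ?k) - of_real (?x (?k + 1)))"
    unfolding stationary_def neg_ham_comm_ansatz_off[OF m sm ne(1)] by simp
  show "lind_op (stationary ail air) \<mu> (shift \<mu>) = 0"
    unfolding lind_op_off_diag[OF m sm ne(1)] up comm_up step using k1 kb
    by (simp add: algebra_simps of_bool_def)
  have comm_down: "neg_ham_comm (stationary ail air) (shift \<mu>) \<mu>
      = of_real (?x ?k) - of_real (?x (?k + 1))"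
    unfolding stationary_def neg_ham_comm_ansatz_off[OF sm m ne(1)[symmetric]] using ne by simp
  show "lind_op (stationary ail air) (shift \<mu>) \<mu> = 0"
    unfolding lind_op_off_diag[OF sm m ne(1)[symmetric]] down comm_down step using k1 kb
    by (simp add: algebra_simps of_bool_def)
qed

lemma lind_op_stationary: "lind_op (stationary ail air) = (\<lambda>\<mu> \<kappa>. - source ail air \<mu> \<kappa>)"
proof (intro ext)
  fix \<mu> \<kappa>
  have "supported (lind_op (stationary ail air))"
    unfolding stationary_def by (intro supported_lind_op supported_ansatz)
  then have outside: "lind_op (stationary ail air) \<mu> \<kappa> = - source ail air \<mu> \<kappa>"
    if "\<mu> \<notin> Lt \<or> \<kappa> \<notin> Lt" using that supported_source unfolding supported_def by auto
  have off: "lind_op (stationary ail air) \<mu> \<kappa> = - source ail air \<mu> \<kappa>"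
    if m: "\<mu> \<in> Lt" and k: "\<kappa> \<in> Lt" and ne: "\<mu> \<noteq> \<kappa>"
  proof -
    have "source ail air \<mu> \<kappa> = 0"
      unfolding source_def Pleft_def Pright_def msum_proj_slab using ne by simp
    moreover have "lind_op (stationary ail air) \<mu> \<kappa> = 0"
    proof (cases "\<kappa> = shift \<mu> \<or> \<mu> = shift \<kappa>")
      case True
      then show ?thesis using lind_op_stationary_shift m k by auto
    next
      case False
      then have "stationary ail air \<mu> \<kappa> = 0" "neg_ham_comm (stationary ail air) \<mu> \<kappa> = 0"
        unfolding stationary_def neg_ham_comm_ansatz_off[OF m k ne] unfolding ansatz_def
        using ne by auto
      then show ?thesis unfolding lind_op_off_diag[OF m k ne] by simp
    qed
    ultimately show ?thesis by simp
  qed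
  show "lind_op (stationary ail air) \<mu> \<kappa> = - source ail air \<mu> \<kappa>"
    using outside off lind_op_stationary_diag by (cases "\<mu> = \<kappa>") auto
qed

lemma R_inf_eq_stationary:
  assumes "zl = ail + aol" "zr = air + aor"
  shows "R_inf N (\<lambda>_. 0) ail aol air aor b = stationary ail air"
proof (intro ext)
  fix \<mu> \<kappa>
  have "R_inf N (\<lambda>_. 0) ail aol air aor b \<mu> \<kappa>
      = integral {0..} (\<lambda>t. exp_lindblad N (\<lambda>_. 0) zl zr b t (source ail air) \<mu> \<kappa>)"
    unfolding R_inf_def source_def assms ..
  also have "\<dots> = integral {0..} (\<lambda>t. evol t (source ail air) \<mu> \<kappa>)"
    unfolding exp_lindblad_eq_evol ..
  also have "\<dots> = stationary ail air \<mu> \<kappa>"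
    by (intro integral_evol_eq supported_source lind_op_stationary)
      (simp add: stationary_def supported_ansatz)
  finally show "R_inf N (\<lambda>_. 0) ail aol air aor b \<mu> \<kappa> = stationary ail air \<mu> \<kappa>" .
qed

lemma current_eq_flux:
  assumes "zl = ail + aol" "zr = air + aor"
  shows "current N (\<lambda>_. 0) ail aol air aor b = 2 * flux ail air * real (card S1)"
proof -
  have "2 * Im (cinner N (basis_vec (shift \<nu>)) (mvec N (stationary ail air) (basis_vec \<nu>)))
      = 2 * flux ail air" if \<nu>: "\<nu> \<in> S1" for \<nu>
  proof -
    have nL: "\<nu> \<in> Lt" and "\<nu>!0 = 1" using \<nu> slab_subset_lattice by (auto simp: slab_def)
    then have sL: "shift \<nu> \<in> Lt" using shift_in_lattice_iff[OF nL] N0_ge_2 by simp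
    show ?thesis unfolding cinner_basis_mvec_basis[OF sL nL]
      using nL sL shift_neq[OF nL] by (simp add: stationary_def ansatz_def)
  qed
  then show ?thesis unfolding current_def R_inf_eq_stationary[OF assms] by simp
qed

end

theorem theorem4p1:
  fixes N :: "nat list" and ainl aoutl ainr aoutr \<beta> :: real
  assumes "length N \<ge> 1"
    and "\<forall>i<length N. N!i \<ge> 1"
    and "N!0 \<ge> 2"
    and "ainl \<ge> 0" "aoutl \<ge> 0" "ainr \<ge> 0" "aoutr \<ge> 0" "\<beta> \<ge> 0"
    and "ainl + aoutl > 0" and "ainr + aoutr > 0"
  shows "current N (\<lambda>_. 0) ainl aoutl ainr aoutr \<beta> =
     2 * (ainl * aoutr - aoutl * ainr) * (\<Prod>n\<in>{1..<length N}. real (N!n))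
     / ((\<beta> * (real (N!0) - 1) + (ainl + aoutl) + (ainr + aoutr)) * (ainl + aoutl) * (ainr + aoutr)
        + (ainl + aoutl) + (ainr + aoutr))"
proof -
  interpret zero_potential_lindblad N "ainl + aoutl" "ainr + aoutr" \<beta>
    using assms by unfold_locales auto
  have "current N (\<lambda>_. 0) ainl aoutl ainr aoutr \<beta>
      = 2 * flux ainl ainr * real (card (slab N 1))"
    by (rule current_eq_flux) simp_all
  also have "card (slab N 1) = (\<Prod>n\<in>{1..<length N}. N!n)"
    using card_slab_1 assms by simp
  finally show ?thesis unfolding flux_def denom_def by (simp add: algebra_simps)
qed

end
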